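(* Let $k\in\{3,4\}$. On $\Gamma_{k+2}\setminus\Omega$ the following hold, with constants independent of $N$, $\lambda$ and the frequencies: (1) $|M_{k+2}|\lesssim m(\xi_1^* )^2|\xi_1^*||\xi_3^*|^2$; (2) if moreover $|\xi_1^*|\sim|\xi_2^*|\gtrsim N\gg|\xi_3^*|\sim|\xi_4^*|$, then $|M_{k+2}|\lesssim|\xi_3^*||\xi_4^*||\xi_5^*|$; (3) if moreover $|\xi_4^*|\gg|\xi_5^*|$, then $|M_{k+2}|\lesssim m(\xi_1^* )^2|\xi_1^*|^2|\xi_5^*|$.
   Context: Fix $k\in\{3,4\}$, $s\in[\tfrac12,1)$, a large parameter $N\ge1$ and a period $\lambda\ge1$. The frequency variables range over $\frac1\lambda\mathbb Z$. The multiplier $m=m_{N,s}:\mathbb R\to(0,1]$ is a smooth even function, nonincreasing in $|\xi|$, with $m(\xi)=1$ for $|\xi|\le N$ and $m(\xi)=N^{1-s}|\xi|^{s-1}$ for $|\xi|>2N$. For $n\ge2$, $\Gamma_n=\{(\xi_1,\dots,\xi_n)\in(\frac1\lambda\mathbb Z)^n:\xi_1+\dots+\xi_n=0\}$. Write $m_j=m(\xi_j)$, $\alpha_n=\xi_1^3+\dots+\xi_n^3$, $M_{k+2}=i(m_1^2\xi_1^3+\dots+m_{k+2}^2\xi_{k+2}^3)$. For a tuple of frequencies, $\xi_1^*,\xi_2^*,\dots$ denotes its rearrangement with $|\xi_1^*|\ge|\xi_2^*|\ge\cdots$; when $k=3$ set $\xi_6^*=0$. Notation: $A\lesssim B$ means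 $A\le CB$ with $C$ independent of $N,\lambda$ and the frequencies; $A\sim B$ means $A\lesssim B\lesssim A$; $A\ll B$ (or $B\gg A$) means $A\le C_0^{-1}B$ for a fixed sufficiently large absolute constant $C_0$. The non-resonant set is $\Omega=\Omega_1\cup\Omega_2\cup\Omega_3\cup\Omega_4\subset\Gamma_{k+2}$, where $\Omega_1=\{|\xi_3^*|\gg|\xi_4^*|\}$; $\Omega_2=\{|\xi_1^*|\sim|\xi_2^*|\gtrsim N\gg|\xi_3^*|\sim|\xi_4^*|,\ |{\xi_1^*}^3+{\xi_2^*}^3|\gg|{\xi_3^*}^3+\dots+{\xi_{k+2}^*}^3|\}$; $\Omega_3=\{|\xi_1^*|\gg|\xi_3^*|,\ |\xi_1^*+\xi_2^*||\xi_1^*|\gg|\xi_3^*|^2\}$; $\Omega_4=\{|\xi_4^*|\gg|\xi_5^*|,\ |\xi_1^*+\xi_2^*||\xi_1^*+\xi_3^*||\xi_1^*+\xi_4^*|\gg|\xi_5^*||\xi_1^*|^2,\ |m(\xi_1^* )^2{\xi_1^*}^3+\dots+m(\xi_4^* )^2{\xi_4^*}^3|\gg|m(\xi_5^* )^2{\xi_5^*}^3+m(\xi_6^* )^2{\xi_6^*}^3|\}$ (each set consisting of the points of $\Gamma_{k+2}$ satisfying the listed conditions). *)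

theory Defs
  imports "HOL-Analysis.Analysis"
begin

text \<open>Asymptotic notation with explicit constants.
  ll C0 a b  means  a << b, i.e. a \<le> C0^{-1} b;
  sim D a b  means  a ~ b with constant D;
  gtrsim D a b means a \<gtrsim> b, i.e. b \<le> D a.\<close>

definition ll :: "real \<Rightarrow> real \<Rightarrow> real \<Rightarrow> bool" where
  "ll C0 a b \<longleftrightarrow> C0 * a \<le> b"

definition sim :: "real \<Rightarrow> real \<Rightarrow> real \<Rightarrow> bool" where
  "sim D a b \<longleftrightarrow> a \<le> D * b \<and> b \<le> D * a"

definition gtrsim :: "real \<Rightarrow> real \<Rightarrow> real \<Rightarrow> bool" where
  "gtrsim D a b \<longleftrightarrow> b \<le> D * a"

definition profile :: "real \<Rightarrow> (real \<Rightarrow> real) \<Rightarrow> bool" where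
  "profile s mu \<longleftrightarrow>
     (\<forall>n. (deriv ^^ n) mu differentiable_on UNIV) \<and>
     (\<forall>x. mu (-x) = mu x) \<and>
     (\<forall>x y. \<bar>x\<bar> \<le> \<bar>y\<bar> \<longrightarrow> mu y \<le> mu x) \<and>
     (\<forall>x. 0 < mu x \<and> mu x \<le> 1) \<and>
     (\<forall>x. \<bar>x\<bar> \<le> 1 \<longrightarrow> mu x = 1) \<and>
     (\<forall>x. \<bar>x\<bar> > 2 \<longrightarrow> mu x = \<bar>x\<bar> powr (s - 1))"

definition mult :: "(real \<Rightarrow> real) \<Rightarrow> real \<Rightarrow> real \<Rightarrow> real" where
  "mult mu N \<xi> = mu (\<xi> / N)"

definition in_Gamma :: "nat \<Rightarrow> real \<Rightarrow> (nat \<Rightarrow> real) \<Rightarrow> bool" where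
  "in_Gamma n lam xi \<longleftrightarrow>
     (\<forall>j\<in>{1..n}. \<exists>z::int. xi j = of_int z / lam) \<and> (\<Sum>j=1..n. xi j) = 0"

definition sorts :: "nat \<Rightarrow> (nat \<Rightarrow> real) \<Rightarrow> (nat \<Rightarrow> nat) \<Rightarrow> bool" where
  "sorts n xi \<sigma> \<longleftrightarrow> bij_betw \<sigma> {1..n} {1..n} \<and>
     (\<forall>i\<in>{1..n}. \<forall>j\<in>{1..n}. i \<le> j \<longrightarrow> \<bar>xi (\<sigma> j)\<bar> \<le> \<bar>xi (\<sigma> i)\<bar>)"

text \<open>The rearranged tuple xi^*; entries beyond n are 0 (so xi_6^* = 0 when k = 3).\<close>

definition star :: "nat \<Rightarrow> (nat \<Rightarrow> real) \<Rightarrow> (nat \<Rightarrow> nat) \<Rightarrow> nat \<Rightarrow> real" where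
  "star n xi \<sigma> i = (if 1 \<le> i \<and> i \<le> n then xi (\<sigma> i) else 0)"

definition Mk :: "nat \<Rightarrow> (real \<Rightarrow> real) \<Rightarrow> (nat \<Rightarrow> real) \<Rightarrow> complex" where
  "Mk n m xi = \<i> * complex_of_real (\<Sum>j=1..n. (m (xi j))\<^sup>2 * (xi j) ^ 3)"

definition Omega1 :: "real \<Rightarrow> (nat \<Rightarrow> real) \<Rightarrow> bool" where
  "Omega1 C0 xs \<longleftrightarrow> ll C0 \<bar>xs 4\<bar> \<bar>xs 3\<bar>"

definition Omega2 :: "nat \<Rightarrow> real \<Rightarrow> real \<Rightarrow> real \<Rightarrow> (nat \<Rightarrow> real) \<Rightarrow> bool" where
  "Omega2 n C0 D N xs \<longleftrightarrow>
     sim D \<bar>xs 1\<bar> \<bar>xs 2\<bar> \<and> gtrsim D \<bar>xs 2\<bar> N \<and> ll C0 \<bar>xs 3\<bar> N \<and> sim D \<bar>xs 3\<bar> \<bar>xs 4\<bar> \<and>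
     ll C0 \<bar>\<Sum>j=3..n. (xs j) ^ 3\<bar> \<bar>(xs 1) ^ 3 + (xs 2) ^ 3\<bar>"

definition Omega3 :: "real \<Rightarrow> (nat \<Rightarrow> real) \<Rightarrow> bool" where
  "Omega3 C0 xs \<longleftrightarrow> ll C0 \<bar>xs 3\<bar> \<bar>xs 1\<bar> \<and>
     ll C0 (\<bar>xs 3\<bar>\<^sup>2) (\<bar>xs 1 + xs 2\<bar> * \<bar>xs 1\<bar>)"

definition Omega4 :: "real \<Rightarrow> (real \<Rightarrow> real) \<Rightarrow> (nat \<Rightarrow> real) \<Rightarrow> bool" where
  "Omega4 C0 m xs \<longleftrightarrow> ll C0 \<bar>xs 5\<bar> \<bar>xs 4\<bar> \<and>
     ll C0 (\<bar>xs 5\<bar> * \<bar>xs 1\<bar>\<^sup>2) (\<bar>xs 1 + xs 2\<bar> * \<bar>xs 1 + xs 3\<bar> * \<bar>xs 1 + xs 4\<bar>) \<and>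
     ll C0 \<bar>(m (xs 5))\<^sup>2 * (xs 5) ^ 3 + (m (xs 6))\<^sup>2 * (xs 6) ^ 3\<bar>
           \<bar>\<Sum>j=1..4. (m (xs j))\<^sup>2 * (xs j) ^ 3\<bar>"

definition in_Omega :: "nat \<Rightarrow> real \<Rightarrow> real \<Rightarrow> real \<Rightarrow> (real \<Rightarrow> real) \<Rightarrow> (nat \<Rightarrow> real) \<Rightarrow> bool" where
  "in_Omega n C0 D N m xs \<longleftrightarrow>
     Omega1 C0 xs \<or> Omega2 n C0 D N xs \<or> Omega3 C0 xs \<or> Omega4 C0 m xs"

end

theory Submission
  imports Defs
begin

text \<open>Write \<open>g x = m(x)\<^sup>2 x\<^sup>3\<close>, so that \<open>|M\<^sub>k\<^sub>+\<^sub>2| = |\<Sum>\<^sub>j g(xi\<^sub>j\<^sup>*)|\<close>. Since the profile is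
  homogeneous of degree \<open>s - 1\<close> on its tail, \<open>|g'(x)| \<lesssim> m(x)\<^sup>2 x\<^sup>2\<close> and \<open>|g''(x)| \<lesssim> m(x)\<^sup>2 |x|\<close>
  uniformly in \<open>N\<close>, and \<open>s \<ge> 1/2\<close> makes \<open>m(x)\<^sup>2 |x|\<^sup>p\<close> almost increasing for \<open>p \<ge> 1\<close>.
  Off \<open>\<Omega>\<^sub>3\<close>, either \<open>xi\<^sub>3\<^sup>*\<close> is comparable to \<open>xi\<^sub>1\<^sup>*\<close> or \<open>xi\<^sub>1\<^sup>* + xi\<^sub>2\<^sup>*\<close> is small and the mean value
  theorem for \<open>g\<close> gives (1). In the high-low regime \<open>m = 1\<close> on the low frequencies, so they contribute
  a sum of cubes, which off \<open>\<Omega>\<^sub>1\<close> and \<open>\<Omega>\<^sub>4\<close> is \<open>\<lesssim> |xi\<^sub>3\<^sup>* xi\<^sub>4\<^sup>* xi\<^sub>5\<^sup>*|\<close> by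
  \<open>a\<^sup>3 + b\<^sup>3 = (a + b)(a\<^sup>2 - a b + b\<^sup>2)\<close>; off \<open>\<Omega>\<^sub>2\<close> the high pair is controlled by this sum, giving (2).
  For (3), a double mean value argument bounds \<open>g(a) + g(b) + g(c) + g(d)\<close> by
  \<open>m(a)\<^sup>2 (|(a + b)(a + c)(a + d)| + a\<^sup>2 |a + b + c + d|)\<close>, which off \<open>\<Omega>\<^sub>4\<close> is small.\<close>

lemma abs_diff_le_of_deriv_bound:
  fixes f f' :: "real \<Rightarrow> real"
  assumes "\<And>t. (f has_real_derivative f' t) (at t)"
    and "\<And>t. t \<in> closed_segment x y \<Longrightarrow> \<bar>f' t\<bar> \<le> B"
  shows "\<bar>f y - f x\<bar> \<le> B * \<bar>y - x\<bar>"
  using field_differentiable_bound[of "closed_segment x y" f f' B y x] assms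
  by (auto intro: has_field_derivative_at_within)

lemma abs_Taylor_remainder_le:
  fixes f f' f'' :: "real \<Rightarrow> real"
  assumes f': "\<And>t. (f has_real_derivative f' t) (at t)"
    and f'': "\<And>t. (f' has_real_derivative f'' t) (at t)"
    and bound: "\<And>t. t \<in> closed_segment x y \<Longrightarrow> \<bar>f'' t\<bar> \<le> B"
  shows "\<bar>f y - f x - f' x * (y - x)\<bar> \<le> B * (y - x)\<^sup>2"
proof -
  have "\<bar>f' t - f' x\<bar> \<le> B * \<bar>y - x\<bar>" if t: "t \<in> closed_segment x y" for t
  proof -
    have "closed_segment x t \<subseteq> closed_segment x y"
      using t by (simp add: subset_closed_segment)
    then have "\<bar>f' t - f' x\<bar> \<le> B * \<bar>t - x\<bar>"
      by (intro abs_diff_le_of_deriv_bound[OF f'' bound]) auto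
    also have "\<dots> \<le> B * \<bar>y - x\<bar>"
      using t dist_in_closed_segment[OF t] bound[OF t]
      by (intro mult_left_mono) (auto simp: dist_real_def abs_minus_commute)
    finally show ?thesis .
  qed
  moreover have "((\<lambda>t. f t - f' x * t) has_real_derivative f' t - f' x) (at t)" for t
    using f' by (auto intro!: derivative_eq_intros)
  ultimately have "\<bar>(f y - f' x * y) - (f x - f' x * x)\<bar> \<le> (B * \<bar>y - x\<bar>) * \<bar>y - x\<bar>"
    by (intro abs_diff_le_of_deriv_bound)
  then show ?thesis
    by (simp add: algebra_simps power2_eq_square abs_mult_self)
qed

lemma abs_le_of_mem_closed_segment:
  fixes t x y :: real
  assumes "t \<in> closed_segment x y" "\<bar>x\<bar> \<le> R" "\<bar>y\<bar> \<le> R"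
  shows "\<bar>t\<bar> \<le> R"
  using assms by (auto simp: closed_segment_eq_real_ivl split: if_splits)

lemma sum_star:
  fixes f :: "real \<Rightarrow> 'a::comm_monoid_add"
  assumes "sorts n xi \<sigma>" "n \<le> n'" and "f 0 = 0"
  shows "(\<Sum>j=1..n. f (xi j)) = (\<Sum>i=1..n'. f (star n xi \<sigma> i))"
proof -
  have "(\<Sum>j=1..n. f (xi j)) = (\<Sum>i=1..n. f (xi (\<sigma> i)))"
    using sum.reindex_bij_betw[of \<sigma> "{1..n}" "{1..n}" "\<lambda>j. f (xi j)"] assms(1)
    by (simp add: sorts_def)
  also have "\<dots> = (\<Sum>i=1..n. f (star n xi \<sigma> i))" by (simp add: star_def)
  also have "\<dots> = (\<Sum>i=1..n'. f (star n xi \<sigma> i))"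
    using assms(2,3) by (intro sum.mono_neutral_left) (auto simp: star_def)
  finally show ?thesis .
qed

lemma abs_add_le_add:
  fixes x y :: real
  shows "\<bar>x\<bar> \<le> b \<Longrightarrow> \<bar>y\<bar> \<le> c \<Longrightarrow> \<bar>x + y\<bar> \<le> b + c"
  using norm_triangle_mono[of x b y c] by simp

lemma sorted3_wlog:
  fixes f :: "'a \<Rightarrow> 'b::linorder"
  assumes sorted: "\<And>x y z. f x \<le> f y \<Longrightarrow> f y \<le> f z \<Longrightarrow> P x y z"
    and swap12: "\<And>x y z. P x y z \<Longrightarrow> P y x z"
    and swap23: "\<And>x y z. P x y z \<Longrightarrow> P x z y"
  shows "P x y z"
  using sorted swap12 swap23 by (metis linear)

text \<open>Here \<open>p, q, r\<close> stand for \<open>a + b, a + c, a + d\<close> and \<open>\<sigma>\<close> for \<open>a + b + c + d\<close>.\<close>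

lemma three_sums_bound:
  fixes a p q r \<sigma> :: real
  assumes pq: "\<bar>p\<bar> \<le> \<bar>q\<bar>" and qr: "\<bar>q\<bar> \<le> \<bar>r\<bar>"
    and sum: "p + q + r = 2 * a + \<sigma>" and \<sigma>: "\<bar>\<sigma>\<bar> \<le> \<bar>a\<bar> / 2"
  shows "\<bar>a\<bar> * \<bar>p\<bar> * \<bar>q\<bar> + a\<^sup>2 * \<bar>\<sigma>\<bar> + \<bar>a\<bar> * p\<^sup>2 + \<bar>a\<bar> * (\<sigma> - p)\<^sup>2
    \<le> 8 * (\<bar>p * q * r\<bar> + a\<^sup>2 * \<bar>\<sigma>\<bar>)"
proof -
  have r: "\<bar>a\<bar> \<le> 2 * \<bar>r\<bar>" using pq qr sum \<sigma> by linarith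
  have apq: "\<bar>a\<bar> * \<bar>p\<bar> * \<bar>q\<bar> \<le> 2 * \<bar>p * q * r\<bar>"
    using mult_right_mono[OF r, of "\<bar>p\<bar> * \<bar>q\<bar>"] by (simp add: abs_mult ac_simps)
  have "\<bar>a\<bar> * p\<^sup>2 \<le> \<bar>a\<bar> * \<bar>p\<bar> * \<bar>q\<bar>"
    using mult_left_mono[OF pq, of "\<bar>a\<bar> * \<bar>p\<bar>"] by (simp add: power2_eq_square ac_simps)
  moreover have sq: "(\<sigma> - p)\<^sup>2 \<le> 2 * \<sigma>\<^sup>2 + 2 * p\<^sup>2"
    using zero_le_power2[of "\<sigma> + p"] by (simp add: power2_eq_square algebra_simps)
  then have "\<bar>a\<bar> * (\<sigma> - p)\<^sup>2 \<le> \<bar>a\<bar> * (2 * \<sigma>\<^sup>2) + 2 * (\<bar>a\<bar> * p\<^sup>2)"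
    using mult_left_mono[OF sq abs_ge_zero[of a]] by (simp add: algebra_simps)
  moreover have "\<bar>a\<bar> * (2 * \<sigma>\<^sup>2) \<le> a\<^sup>2 * \<bar>\<sigma>\<bar>"
    using mult_left_mono[OF \<sigma>, of "2 * \<bar>a\<bar> * \<bar>\<sigma>\<bar>"]
    by (simp add: power2_eq_square algebra_simps)
  ultimately show ?thesis
    using apq mult_nonneg_nonneg[OF zero_le_power2[of a] abs_ge_zero[of \<sigma>]] by argo
qed

lemma add_cubes_lower:
  fixes x y :: real
  assumes "\<bar>y\<bar> \<le> \<bar>x\<bar>"
  shows "x\<^sup>2 * \<bar>x + y\<bar> \<le> 2 * \<bar>x ^ 3 + y ^ 3\<bar>"
proof -
  have "0 \<le> (x - y)\<^sup>2 + y\<^sup>2" by simp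
  then have "x\<^sup>2 \<le> 2 * (x\<^sup>2 - x * y + y\<^sup>2)" by (simp add: power2_eq_square algebra_simps)
  then have "x\<^sup>2 * \<bar>x + y\<bar> \<le> 2 * (x\<^sup>2 - x * y + y\<^sup>2) * \<bar>x + y\<bar>"
    by (intro mult_right_mono) auto
  also have "\<dots> = 2 * \<bar>x ^ 3 + y ^ 3\<bar>"
  proof -
    have "0 \<le> (x - y)\<^sup>2 + x\<^sup>2 + y\<^sup>2" by simp
    then have "0 \<le> x\<^sup>2 - x * y + y\<^sup>2" by (simp add: power2_eq_square algebra_simps)
    moreover have "x ^ 3 + y ^ 3 = (x + y) * (x\<^sup>2 - x * y + y\<^sup>2)"
      by (simp add: power2_eq_square power3_eq_cube algebra_simps)
    ultimately show ?thesis by (simp add: abs_mult)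
  qed
  finally show ?thesis .
qed

lemma add_cubes_upper:
  fixes x y :: real
  assumes "\<bar>y\<bar> \<le> \<bar>x\<bar>"
  shows "\<bar>x ^ 3 + y ^ 3\<bar> \<le> 3 * x\<^sup>2 * \<bar>x + y\<bar>"
proof -
  have "\<bar>x * y\<bar> \<le> x\<^sup>2"
    using mult_left_mono[OF assms, of "\<bar>x\<bar>"] by (simp add: abs_mult power2_eq_square)
  moreover have "y\<^sup>2 \<le> x\<^sup>2" using assms by (simp add: abs_le_square_iff)
  ultimately have Q: "\<bar>x\<^sup>2 - x * y + y\<^sup>2\<bar> \<le> 3 * x\<^sup>2"
    using abs_triangle_ineq4[of "x\<^sup>2" "x * y"] abs_triangle_ineq[of "x\<^sup>2 - x * y" "y\<^sup>2"] by simp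
  have "x ^ 3 + y ^ 3 = (x + y) * (x\<^sup>2 - x * y + y\<^sup>2)"
    by (simp add: power2_eq_square power3_eq_cube algebra_simps)
  then have "\<bar>x ^ 3 + y ^ 3\<bar> = \<bar>x + y\<bar> * \<bar>x\<^sup>2 - x * y + y\<^sup>2\<bar>" by (simp add: abs_mult)
  also have "\<dots> \<le> \<bar>x + y\<bar> * (3 * x\<^sup>2)" using Q by (intro mult_left_mono) auto
  finally show ?thesis by (simp add: ac_simps)
qed

lemma Omega2_6_iff:
  "Omega2 6 C0 D N xs \<longleftrightarrow> sim D \<bar>xs 1\<bar> \<bar>xs 2\<bar> \<and> gtrsim D \<bar>xs 2\<bar> N \<and> ll C0 \<bar>xs 3\<bar> N \<and>
    sim D \<bar>xs 3\<bar> \<bar>xs 4\<bar> \<and> ll C0 \<bar>xs 3 ^ 3 + xs 4 ^ 3 + xs 5 ^ 3 + xs 6 ^ 3\<bar> \<bar>xs 1 ^ 3 + xs 2 ^ 3\<bar>"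
  by (simp add: Omega2_def numeral_eq_Suc add.assoc)

text \<open>\<open>a i\<close> plays the role of \<open>xi\<^sub>i\<^sup>*\<close>; for \<open>k = 3\<close> the sixth entry is \<open>0\<close>.\<close>

locale frequency_tuple =
  fixes a :: "nat \<Rightarrow> real"
  assumes abs_sorted: "\<And>i j. 1 \<le> i \<Longrightarrow> i \<le> j \<Longrightarrow> j \<le> 6 \<Longrightarrow> \<bar>a j\<bar> \<le> \<bar>a i\<bar>"
    and sum_zero: "a 1 + a 2 + a 3 + a 4 + a 5 + a 6 = 0"
begin

lemma abs_add_cubes56_le: "\<bar>a 5 ^ 3 + a 6 ^ 3\<bar> \<le> 2 * (\<bar>a 3\<bar> * \<bar>a 4\<bar> * \<bar>a 5\<bar>)"
proof -
  have "\<bar>a 5 ^ 3\<bar> \<le> \<bar>a 3\<bar> * \<bar>a 4\<bar> * \<bar>a 5\<bar>"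
    unfolding power3_eq_cube abs_mult by (intro mult_mono) (auto simp: abs_sorted)
  moreover have "\<bar>a 6 ^ 3\<bar> \<le> \<bar>a 5 ^ 3\<bar>"
    by (simp add: power_abs power_mono abs_sorted)
  ultimately show ?thesis using abs_triangle_ineq[of "a 5 ^ 3" "a 6 ^ 3"] by linarith
qed

lemma abs_a1_add_a2_le_small_product:
  assumes a13: "2 * \<bar>a 3\<bar> \<le> \<bar>a 1\<bar>"
    and prod: "\<bar>a 1 + a 2\<bar> * \<bar>a 1 + a 3\<bar> * \<bar>a 1 + a 4\<bar> < C0 * (\<bar>a 5\<bar> * \<bar>a 1\<bar>\<^sup>2)"
  shows "\<bar>a 1 + a 2\<bar> \<le> 4 * C0 * \<bar>a 5\<bar>"
proof -
  have "0 \<le> \<bar>a 1 + a 2\<bar> * \<bar>a 1 + a 3\<bar> * \<bar>a 1 + a 4\<bar>" by simp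
  with prod have "0 < C0 * (\<bar>a 5\<bar> * \<bar>a 1\<bar>\<^sup>2)" by linarith
  then have a1: "0 < \<bar>a 1\<bar>" by (auto simp: zero_less_mult_iff)
  have "\<bar>a 1\<bar> / 2 \<le> \<bar>a 1 + a 3\<bar>" "\<bar>a 1\<bar> / 2 \<le> \<bar>a 1 + a 4\<bar>"
    using a13 abs_sorted[of 3 4] by linarith+
  then have "\<bar>a 1 + a 2\<bar> * (\<bar>a 1\<bar> / 2) * (\<bar>a 1\<bar> / 2) \<le> \<bar>a 1 + a 2\<bar> * \<bar>a 1 + a 3\<bar> * \<bar>a 1 + a 4\<bar>"
    using a1 by (intro mult_mono) auto
  moreover have "\<bar>a 1 + a 2\<bar> * (\<bar>a 1\<bar> / 2) * (\<bar>a 1\<bar> / 2) = \<bar>a 1 + a 2\<bar> / 4 * \<bar>a 1\<bar>\<^sup>2"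
    "C0 * (\<bar>a 5\<bar> * \<bar>a 1\<bar>\<^sup>2) = C0 * \<bar>a 5\<bar> * \<bar>a 1\<bar>\<^sup>2"
    by (simp_all add: power2_eq_square)
  ultimately have "\<bar>a 1 + a 2\<bar> / 4 * \<bar>a 1\<bar>\<^sup>2 < C0 * \<bar>a 5\<bar> * \<bar>a 1\<bar>\<^sup>2"
    using prod by linarith
  then show ?thesis using a1 by (simp add: mult_less_cancel_right)
qed

lemma abs_add_cubes34_le_no_gap:
  assumes C0: "1 \<le> C0" and a34: "\<bar>a 3\<bar> \<le> C0 * \<bar>a 4\<bar>" and a45: "\<bar>a 4\<bar> < C0 * \<bar>a 5\<bar>"
  shows "\<bar>a 3 ^ 3 + a 4 ^ 3\<bar> \<le> 2 * C0 ^ 3 * (\<bar>a 3\<bar> * \<bar>a 4\<bar> * \<bar>a 5\<bar>)"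
proof -
  have "\<bar>a 3\<bar> \<le> C0 * (C0 * \<bar>a 5\<bar>)"
    using a34 mult_left_mono[OF less_imp_le[OF a45], of C0] C0 by linarith
  then have "\<bar>a 3\<bar> ^ 3 \<le> \<bar>a 3\<bar> * (C0 * \<bar>a 4\<bar>) * (C0 * (C0 * \<bar>a 5\<bar>))"
    unfolding power3_eq_cube using a34 by (intro mult_mono) auto
  then have "\<bar>a 3 ^ 3\<bar> \<le> C0 ^ 3 * (\<bar>a 3\<bar> * \<bar>a 4\<bar> * \<bar>a 5\<bar>)"
    unfolding power_abs by (simp add: power3_eq_cube algebra_simps)
  moreover have "\<bar>a 4 ^ 3\<bar> \<le> \<bar>a 3 ^ 3\<bar>" by (simp add: power_abs power_mono abs_sorted)
  ultimately show ?thesis using abs_triangle_ineq[of "a 3 ^ 3" "a 4 ^ 3"] by linarith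
qed

lemma abs_add_cubes34_le_small_product:
  assumes C0: "1 \<le> C0" and a13: "2 * \<bar>a 3\<bar> \<le> \<bar>a 1\<bar>" and a34: "\<bar>a 3\<bar> \<le> C0 * \<bar>a 4\<bar>"
    and prod: "\<bar>a 1 + a 2\<bar> * \<bar>a 1 + a 3\<bar> * \<bar>a 1 + a 4\<bar> < C0 * (\<bar>a 5\<bar> * \<bar>a 1\<bar>\<^sup>2)"
  shows "\<bar>a 3 ^ 3 + a 4 ^ 3\<bar> \<le> (12 * C0\<^sup>2 + 6 * C0) * (\<bar>a 3\<bar> * \<bar>a 4\<bar> * \<bar>a 5\<bar>)"
proof -
  have s34: "\<bar>a 4\<bar> \<le> \<bar>a 3\<bar>" and s56: "\<bar>a 6\<bar> \<le> \<bar>a 5\<bar>" by (simp_all add: abs_sorted)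
  have "a 3 + a 4 = - (a 1 + a 2) - a 5 - a 6" using sum_zero by linarith
  then have a34_sum: "\<bar>a 3 + a 4\<bar> \<le> (4 * C0 + 2) * \<bar>a 5\<bar>"
    using abs_a1_add_a2_le_small_product[OF a13 prod] s56 by (simp add: algebra_simps)
  have "(a 3)\<^sup>2 \<le> \<bar>a 3\<bar> * (C0 * \<bar>a 4\<bar>)"
    using mult_left_mono[OF a34 abs_ge_zero[of "a 3"]] by (simp add: power2_eq_square abs_mult_self)
  then have "3 * (a 3)\<^sup>2 * \<bar>a 3 + a 4\<bar> \<le> 3 * (\<bar>a 3\<bar> * (C0 * \<bar>a 4\<bar>)) * ((4 * C0 + 2) * \<bar>a 5\<bar>)"
    using a34_sum C0 by (intro mult_mono mult_left_mono) auto
  also have "\<dots> = (12 * C0\<^sup>2 + 6 * C0) * (\<bar>a 3\<bar> * \<bar>a 4\<bar> * \<bar>a 5\<bar>)"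
    by (simp add: power2_eq_square algebra_simps)
  finally show ?thesis using add_cubes_upper[OF s34] by linarith
qed

lemma abs_add_cubes34_le:
  assumes C0: "1 \<le> C0" and a13: "2 * \<bar>a 3\<bar> \<le> \<bar>a 1\<bar>" and not_Omega1: "\<not> Omega1 C0 a"
    and not_Omega4: "\<not> ll C0 \<bar>a 5\<bar> \<bar>a 4\<bar> \<or>
      \<not> ll C0 (\<bar>a 5\<bar> * \<bar>a 1\<bar>\<^sup>2) (\<bar>a 1 + a 2\<bar> * \<bar>a 1 + a 3\<bar> * \<bar>a 1 + a 4\<bar>)"
  shows "\<bar>a 3 ^ 3 + a 4 ^ 3\<bar> \<le> 22 * C0 ^ 3 * (\<bar>a 3\<bar> * \<bar>a 4\<bar> * \<bar>a 5\<bar>)"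
proof -
  define V where "V = \<bar>a 3\<bar> * \<bar>a 4\<bar> * \<bar>a 5\<bar>"
  have V: "0 \<le> V" by (simp add: V_def)
  have a34: "\<bar>a 3\<bar> \<le> C0 * \<bar>a 4\<bar>" using not_Omega1 by (simp add: Omega1_def ll_def)
  have "C0\<^sup>2 \<le> C0 ^ 3" "C0 \<le> C0 ^ 3"
    using power_increasing[of 2 3 C0] power_increasing[of 1 3 C0] C0 by simp_all
  then have "2 * C0 ^ 3 \<le> 22 * C0 ^ 3" "12 * C0\<^sup>2 + 6 * C0 \<le> 22 * C0 ^ 3" using C0 by linarith+
  moreover have "\<bar>a 3 ^ 3 + a 4 ^ 3\<bar> \<le> 2 * C0 ^ 3 * V \<or> \<bar>a 3 ^ 3 + a 4 ^ 3\<bar> \<le> (12 * C0\<^sup>2 + 6 * C0) * V"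
    using abs_add_cubes34_le_no_gap[OF C0 a34] abs_add_cubes34_le_small_product[OF C0 a13 a34] not_Omega4
    unfolding V_def ll_def by fastforce
  ultimately show ?thesis
    unfolding V_def[symmetric] using mult_right_mono[OF _ V] by (meson order_trans)
qed

lemma abs_sum_low_cubes_le:
  assumes C0: "1 \<le> C0" and a13: "2 * \<bar>a 3\<bar> \<le> \<bar>a 1\<bar>" and not_Omega1: "\<not> Omega1 C0 a"
    and not_Omega4: "\<not> ll C0 \<bar>a 5\<bar> \<bar>a 4\<bar> \<or>
      \<not> ll C0 (\<bar>a 5\<bar> * \<bar>a 1\<bar>\<^sup>2) (\<bar>a 1 + a 2\<bar> * \<bar>a 1 + a 3\<bar> * \<bar>a 1 + a 4\<bar>)"
  shows "\<bar>a 3 ^ 3 + a 4 ^ 3 + a 5 ^ 3 + a 6 ^ 3\<bar> \<le> 24 * C0 ^ 3 * (\<bar>a 3\<bar> * \<bar>a 4\<bar> * \<bar>a 5\<bar>)"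
proof -
  define V where "V = \<bar>a 3\<bar> * \<bar>a 4\<bar> * \<bar>a 5\<bar>"
  have "2 * V \<le> 2 * C0 ^ 3 * V"
    using mult_right_mono[OF one_le_power[OF C0, of 3], of V] by (simp add: V_def)
  then show ?thesis
    using abs_add_cubes34_le[OF assms] abs_add_cubes56_le
      abs_triangle_ineq[of "a 3 ^ 3 + a 4 ^ 3" "a 5 ^ 3 + a 6 ^ 3"]
    unfolding V_def[symmetric] by (simp add: add.assoc)
qed

lemma abs_a3_le_half_a1:
  assumes D: "1 \<le> D" and CD: "2 * D \<le> C0" and "gtrsim D \<bar>a 2\<bar> N" "ll C0 \<bar>a 3\<bar> N"
  shows "2 * \<bar>a 3\<bar> \<le> \<bar>a 1\<bar>"
proof -
  have "D * (2 * \<bar>a 3\<bar>) \<le> C0 * \<bar>a 3\<bar>"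
    using mult_right_mono[OF CD abs_ge_zero[of "a 3"]] by (simp add: mult.assoc mult.left_commute)
  moreover have "D * \<bar>a 2\<bar> \<le> D * \<bar>a 1\<bar>" using D by (intro mult_left_mono) (auto simp: abs_sorted)
  ultimately have "D * (2 * \<bar>a 3\<bar>) \<le> D * \<bar>a 1\<bar>" using assms(3,4) by (simp add: ll_def gtrsim_def)
  then show ?thesis using D by simp
qed

end

lemma frequency_tuple_star:
  assumes n: "n \<le> 6" and Gamma: "in_Gamma n lam xi" and sorts: "sorts n xi \<sigma>"
  shows "frequency_tuple (star n xi \<sigma>)"
proof
  fix i j :: nat assume "1 \<le> i" "i \<le> j" "j \<le> 6"
  then show "\<bar>star n xi \<sigma> j\<bar> \<le> \<bar>star n xi \<sigma> i\<bar>"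
    using sorts by (auto simp: star_def sorts_def)
next
  have "(\<Sum>i=1..6. star n xi \<sigma> i) = (\<Sum>j=1..n. xi j)"
    using sum_star[OF sorts n, of "\<lambda>x. x"] by simp
  also have "\<dots> = 0" using Gamma by (simp add: in_Gamma_def)
  finally show "star n xi \<sigma> 1 + star n xi \<sigma> 2 + star n xi \<sigma> 3 + star n xi \<sigma> 4 + star n xi \<sigma> 5
      + star n xi \<sigma> 6 = 0"
    by (simp add: numeral_eq_Suc add.assoc)
qed

lemma in_Omega_star:
  assumes "n \<le> 6"
  shows "in_Omega n C0 D N m (star n xi \<sigma>) \<longleftrightarrow> in_Omega 6 C0 D N m (star n xi \<sigma>)"
proof -
  have "(\<Sum>j=3..n. star n xi \<sigma> j ^ 3) = (\<Sum>j=3..6. star n xi \<sigma> j ^ 3)"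
    using assms by (intro sum.mono_neutral_left) (auto simp: star_def)
  then show ?thesis by (simp add: in_Omega_def Omega2_def)
qed

text \<open>\<open>m\<close> abstracts the rescaled multiplier \<open>mult mu N\<close>, with derivatives \<open>m'\<close> and \<open>m''\<close>. The bounds
  on \<open>m' x * x\<close> and \<open>m'' x * x\<^sup>2\<close> are invariant under \<open>x \<mapsto> x / N\<close>, so \<open>K\<close> does not depend
  on \<open>N\<close>.\<close>

locale symbol_multiplier =
  fixes m m' m'' :: "real \<Rightarrow> real" and K N :: real
  assumes has_deriv_m: "\<And>x. (m has_real_derivative m' x) (at x)"
    and has_deriv_m': "\<And>x. (m' has_real_derivative m'' x) (at x)"
    and m_pos: "\<And>x. 0 < m x" and m_le_1: "\<And>x. m x \<le> 1" and m_even: "\<And>x. m (- x) = m x"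
    and m_eq_1: "\<And>x. \<bar>x\<bar> \<le> N \<Longrightarrow> m x = 1"
    and m_almost_mono:
      "\<And>x y p. \<bar>y\<bar> \<le> \<bar>x\<bar> \<Longrightarrow> 0 < p \<Longrightarrow> (m y)\<^sup>2 * \<bar>y\<bar> ^ p \<le> 9 * (m x)\<^sup>2 * \<bar>x\<bar> ^ p"
    and m'_bound: "\<And>x. \<bar>m' x * x\<bar> \<le> K * m x"
    and m''_bound: "\<And>x. \<bar>m'' x * x\<^sup>2\<bar> \<le> K * m x"
begin

definition g :: "real \<Rightarrow> real" where
  "g x = (m x)\<^sup>2 * x ^ 3"

definition g' :: "real \<Rightarrow> real" where
  "g' x = 2 * m x * m' x * x ^ 3 + 3 * (m x)\<^sup>2 * x\<^sup>2"

definition g'' :: "real \<Rightarrow> real" where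
  "g'' x = 2 * (m' x)\<^sup>2 * x ^ 3 + 2 * m x * m'' x * x ^ 3 + 12 * m x * m' x * x\<^sup>2 + 6 * (m x)\<^sup>2 * x"

definition Kg :: real where
  "Kg = 2 * K\<^sup>2 + 14 * K + 6"

definition C_off_Omega :: "real \<Rightarrow> real" where
  "C_off_Omega C0 = 9 * (6 + Kg) * C0\<^sup>2 + 24 * C0 ^ 3 * (1 + 18 * Kg * C0) + 90 * (1 + Kg) * (C0 + 2)"

lemma K_nonneg: "0 \<le> K"
proof -
  have "0 \<le> K * m 1" using m'_bound[of 1] by (meson abs_ge_zero order_trans)
  then show ?thesis using m_pos[of 1] by (simp add: zero_le_mult_iff)
qed

lemma Kg_nonneg: "0 \<le> Kg"
  using K_nonneg by (simp add: Kg_def)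

lemma has_deriv_g: "(g has_real_derivative g' x) (at x)"
  unfolding g_def[abs_def] g'_def
  by (auto intro!: derivative_eq_intros has_deriv_m simp: power2_eq_square power3_eq_cube algebra_simps)

lemma has_deriv_g': "(g' has_real_derivative g'' x) (at x)"
  unfolding g'_def[abs_def] g''_def
  by (auto intro!: derivative_eq_intros has_deriv_m has_deriv_m'
      simp: power2_eq_square power3_eq_cube algebra_simps)

lemma g_minus: "g (- x) = - g x"
  by (simp add: g_def m_even)

lemma abs_g'_le: "\<bar>g' x\<bar> \<le> Kg * (m x)\<^sup>2 * x\<^sup>2"
proof -
  have "g' x = x\<^sup>2 * m x * (2 * (m' x * x) + 3 * m x)"
    by (simp add: g'_def power2_eq_square power3_eq_cube algebra_simps)
  moreover have "\<bar>2 * (m' x * x) + 3 * m x\<bar> \<le> (2 * K + 3) * m x"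
    using m'_bound[of x] m_pos[of x] by (simp add: algebra_simps)
  ultimately have "\<bar>g' x\<bar> \<le> x\<^sup>2 * m x * ((2 * K + 3) * m x)"
    using m_pos[of x] by (simp add: abs_mult mult_left_mono)
  also have "\<dots> = (2 * K + 3) * ((m x)\<^sup>2 * x\<^sup>2)"
    by (simp add: power2_eq_square algebra_simps)
  also have "\<dots> \<le> Kg * ((m x)\<^sup>2 * x\<^sup>2)"
    using K_nonneg by (intro mult_right_mono) (auto simp: Kg_def)
  finally show ?thesis by (simp add: mult.assoc)
qed

lemma abs_g''_le: "\<bar>g'' x\<bar> \<le> Kg * (m x)\<^sup>2 * \<bar>x\<bar>"
proof -
  define u p q where "u = m x" and "p = m' x * x" and "q = m'' x * x\<^sup>2"
  have u: "0 < u" and p: "\<bar>p\<bar> \<le> K * u" and q: "\<bar>q\<bar> \<le> K * u"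
    using m_pos m'_bound m''_bound by (simp_all add: u_def p_def q_def)
  have "p\<^sup>2 \<le> (K * u)\<^sup>2"
    using power_mono[OF p, of 2] by simp
  moreover have "\<bar>u * q\<bar> \<le> u * (K * u)" "\<bar>u * p\<bar> \<le> u * (K * u)"
    using u p q by (simp_all add: abs_mult mult_left_mono)
  ultimately have "\<bar>2 * p\<^sup>2 + 2 * (u * q) + 12 * (u * p) + 6 * u\<^sup>2\<bar>
      \<le> 2 * (K * u)\<^sup>2 + 2 * (u * (K * u)) + 12 * (u * (K * u)) + 6 * u\<^sup>2"
    by (simp only: abs_le_iff)
      (use zero_le_power2[of p] zero_le_power2[of "K * u"] zero_le_power2[of u] in \<open>elim conjE; linarith\<close>)
  also have "\<dots> = Kg * (m x)\<^sup>2"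
    by (simp add: Kg_def u_def power2_eq_square algebra_simps)
  finally have bracket: "\<bar>2 * p\<^sup>2 + 2 * (u * q) + 12 * (u * p) + 6 * u\<^sup>2\<bar> \<le> Kg * (m x)\<^sup>2" .
  have "g'' x = x * (2 * p\<^sup>2 + 2 * (u * q) + 12 * (u * p) + 6 * u\<^sup>2)"
    by (simp add: g''_def u_def p_def q_def power2_eq_square power3_eq_cube algebra_simps)
  then have "\<bar>g'' x\<bar> = \<bar>x\<bar> * \<bar>2 * p\<^sup>2 + 2 * (u * q) + 12 * (u * p) + 6 * u\<^sup>2\<bar>"
    by (simp add: abs_mult)
  also have "\<dots> \<le> \<bar>x\<bar> * (Kg * (m x)\<^sup>2)"
    using bracket by (intro mult_left_mono) auto
  finally show ?thesis by (simp add: ac_simps)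
qed

lemma Omega4_iff:
  "Omega4 C0 m xs \<longleftrightarrow> ll C0 \<bar>xs 5\<bar> \<bar>xs 4\<bar> \<and>
    ll C0 (\<bar>xs 5\<bar> * \<bar>xs 1\<bar>\<^sup>2) (\<bar>xs 1 + xs 2\<bar> * \<bar>xs 1 + xs 3\<bar> * \<bar>xs 1 + xs 4\<bar>) \<and>
    ll C0 \<bar>g (xs 5) + g (xs 6)\<bar> \<bar>g (xs 1) + g (xs 2) + g (xs 3) + g (xs 4)\<bar>"
  by (simp add: Omega4_def g_def numeral_eq_Suc add.assoc)

lemma abs_g: "\<bar>g x\<bar> = (m x)\<^sup>2 * \<bar>x\<bar> ^ 3"
  by (simp add: g_def abs_mult power_abs)

lemma abs_g_le_linear:
  assumes "\<bar>y\<bar> \<le> \<bar>x\<bar>"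
  shows "\<bar>g y\<bar> \<le> 9 * (m x)\<^sup>2 * x\<^sup>2 * \<bar>y\<bar>"
proof -
  have "(m y)\<^sup>2 * \<bar>y\<bar> ^ 2 * \<bar>y\<bar> \<le> 9 * (m x)\<^sup>2 * \<bar>x\<bar> ^ 2 * \<bar>y\<bar>"
    using assms by (intro mult_right_mono m_almost_mono) auto
  then show ?thesis by (simp add: abs_g power3_eq_cube power2_eq_square mult.assoc)
qed

lemma abs_g_le_quadratic:
  assumes "\<bar>y\<bar> \<le> \<bar>x\<bar>"
  shows "\<bar>g y\<bar> \<le> 9 * (m x)\<^sup>2 * \<bar>x\<bar> * y\<^sup>2"
proof -
  have "(m y)\<^sup>2 * \<bar>y\<bar> ^ 1 * y\<^sup>2 \<le> 9 * (m x)\<^sup>2 * \<bar>x\<bar> ^ 1 * y\<^sup>2"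
    using assms by (intro mult_right_mono m_almost_mono) auto
  then show ?thesis by (simp add: abs_g power3_eq_cube power2_eq_square mult.assoc)
qed

lemma abs_g'_le_dominated:
  assumes "\<bar>y\<bar> \<le> \<bar>x\<bar>"
  shows "\<bar>g' y\<bar> \<le> 9 * Kg * (m x)\<^sup>2 * x\<^sup>2"
proof -
  have "Kg * ((m y)\<^sup>2 * \<bar>y\<bar> ^ 2) \<le> Kg * (9 * (m x)\<^sup>2 * \<bar>x\<bar> ^ 2)"
    using assms Kg_nonneg by (intro mult_left_mono m_almost_mono) auto
  then show ?thesis using abs_g'_le[of y] by (simp add: mult.assoc mult.left_commute)
qed

lemma abs_g''_le_dominated:
  assumes "\<bar>y\<bar> \<le> \<bar>x\<bar>"
  shows "\<bar>g'' y\<bar> \<le> 9 * Kg * (m x)\<^sup>2 * \<bar>x\<bar>"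
proof -
  have "Kg * ((m y)\<^sup>2 * \<bar>y\<bar> ^ 1) \<le> Kg * (9 * (m x)\<^sup>2 * \<bar>x\<bar> ^ 1)"
    using assms Kg_nonneg by (intro mult_left_mono m_almost_mono) auto
  then show ?thesis using abs_g''_le[of y] by (simp add: mult.assoc mult.left_commute)
qed

lemma abs_g'_le_segment:
  "\<bar>x\<bar> \<le> \<bar>z\<bar> \<Longrightarrow> \<bar>y\<bar> \<le> \<bar>z\<bar> \<Longrightarrow> t \<in> closed_segment x y \<Longrightarrow> \<bar>g' t\<bar> \<le> 9 * Kg * (m z)\<^sup>2 * z\<^sup>2"
  by (rule abs_g'_le_dominated, rule abs_le_of_mem_closed_segment)

lemma abs_g''_le_segment:
  "\<bar>x\<bar> \<le> \<bar>z\<bar> \<Longrightarrow> \<bar>y\<bar> \<le> \<bar>z\<bar> \<Longrightarrow> t \<in> closed_segment x y \<Longrightarrow> \<bar>g'' t\<bar> \<le> 9 * Kg * (m z)\<^sup>2 * \<bar>z\<bar>"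
  by (rule abs_g''_le_dominated, rule abs_le_of_mem_closed_segment)

lemma abs_g_add_le:
  assumes "\<bar>x\<bar> \<le> \<bar>z\<bar>" "\<bar>y\<bar> \<le> \<bar>z\<bar>"
  shows "\<bar>g x + g y\<bar> \<le> 9 * Kg * (m z)\<^sup>2 * z\<^sup>2 * \<bar>x + y\<bar>"
proof -
  have "\<bar>- y\<bar> \<le> \<bar>z\<bar>" using assms by simp
  from abs_diff_le_of_deriv_bound[where x = "- y" and y = x, OF has_deriv_g abs_g'_le_segment[OF this assms(1)]]
  show ?thesis by (simp add: g_minus)
qed

lemma abs_g_add_le_cubes:
  assumes "\<bar>y\<bar> \<le> \<bar>x\<bar>"
  shows "\<bar>g x + g y\<bar> \<le> 18 * Kg * \<bar>x ^ 3 + y ^ 3\<bar>"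
proof -
  have "\<bar>g x + g y\<bar> \<le> 9 * Kg * ((m x)\<^sup>2 * (x\<^sup>2 * \<bar>x + y\<bar>))"
    using abs_g_add_le[OF order_refl assms] by (simp add: ac_simps)
  also have "\<dots> \<le> 9 * Kg * (1 * (2 * \<bar>x ^ 3 + y ^ 3\<bar>))"
  proof (rule mult_left_mono)
    have "(m x)\<^sup>2 \<le> 1" using m_le_1[of x] m_pos[of x] by (simp add: power_le_one)
    then show "(m x)\<^sup>2 * (x\<^sup>2 * \<bar>x + y\<bar>) \<le> 1 * (2 * \<bar>x ^ 3 + y ^ 3\<bar>)"
      by (rule mult_mono[OF _ add_cubes_lower[OF assms]]) simp_all
  qed (use Kg_nonneg in simp)
  finally show ?thesis by simp
qed

text \<open>The double mean value argument: pair \<open>a\<close> with \<open>b\<close> and \<open>c\<close> with \<open>d\<close>, expand \<open>g\<close> to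
  second order at \<open>a\<close> and at \<open>-c\<close>, and compare the two first-order terms by the mean value
  theorem for \<open>g'\<close>.\<close>

lemma abs_sum4_g_le_Taylor:
  assumes b: "\<bar>b\<bar> \<le> \<bar>a\<bar>" and c: "\<bar>c\<bar> \<le> \<bar>a\<bar>" and d: "\<bar>d\<bar> \<le> \<bar>a\<bar>"
  shows "\<bar>g a + g b + g c + g d\<bar> \<le> 9 * Kg * (m a)\<^sup>2 *
    (\<bar>a\<bar> * \<bar>a + b\<bar> * \<bar>a + c\<bar> + a\<^sup>2 * \<bar>a + b + c + d\<bar> + \<bar>a\<bar> * (a + b)\<^sup>2 + \<bar>a\<bar> * (c + d)\<^sup>2)"
proof -
  define L where "L = 9 * Kg * (m a)\<^sup>2"
  define e1 where "e1 = g (- b) - g a - g' a * (- b - a)"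
  define e2 where "e2 = g d - g (- c) - g' (- c) * (d - - c)"
  have a: "\<bar>a\<bar> \<le> \<bar>a\<bar>" and b': "\<bar>- b\<bar> \<le> \<bar>a\<bar>" and c': "\<bar>- c\<bar> \<le> \<bar>a\<bar>" using b c by simp_all
  have e1: "\<bar>e1\<bar> \<le> L * \<bar>a\<bar> * (a + b)\<^sup>2"
    using abs_Taylor_remainder_le[where x = a and y = "- b", OF has_deriv_g has_deriv_g' abs_g''_le_segment[OF a b']]
    by (simp add: e1_def L_def power2_commute)
  have e2: "\<bar>e2\<bar> \<le> L * \<bar>a\<bar> * (c + d)\<^sup>2"
    using abs_Taylor_remainder_le[where x = "- c" and y = d, OF has_deriv_g has_deriv_g' abs_g''_le_segment[OF c' d]]
    by (simp add: e2_def L_def add.commute)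
  have "\<bar>g' a - g' (- c)\<bar> \<le> L * \<bar>a\<bar> * \<bar>a + c\<bar>"
    using abs_diff_le_of_deriv_bound[where x = "- c" and y = a, OF has_deriv_g' abs_g''_le_segment[OF c' a]]
    by (simp add: L_def)
  then have main: "\<bar>(a + b) * (g' a - g' (- c))\<bar> \<le> \<bar>a + b\<bar> * (L * \<bar>a\<bar> * \<bar>a + c\<bar>)"
    unfolding abs_mult by (rule mult_left_mono) simp
  have "\<bar>g' (- c)\<bar> \<le> L * a\<^sup>2"
    using abs_g'_le_dominated[OF c'] by (simp add: L_def)
  then have sum: "\<bar>g' (- c) * (a + b + c + d)\<bar> \<le> L * a\<^sup>2 * \<bar>a + b + c + d\<bar>"
    unfolding abs_mult by (rule mult_right_mono) simp
  have "g a + g b + g c + g d = (a + b) * (g' a - g' (- c)) + g' (- c) * (a + b + c + d) - e1 + e2"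
    by (simp add: e1_def e2_def g_minus algebra_simps)
  then have "\<bar>g a + g b + g c + g d\<bar> \<le>
      \<bar>a + b\<bar> * (L * \<bar>a\<bar> * \<bar>a + c\<bar>) + L * a\<^sup>2 * \<bar>a + b + c + d\<bar> + L * \<bar>a\<bar> * (a + b)\<^sup>2 + L * \<bar>a\<bar> * (c + d)\<^sup>2"
    using main sum e1 e2 by linarith
  then show ?thesis by (simp add: L_def algebra_simps)
qed

lemma abs_sum4_g_le_crude:
  assumes b: "\<bar>b\<bar> \<le> \<bar>a\<bar>" and c: "\<bar>c\<bar> \<le> \<bar>a\<bar>" and d: "\<bar>d\<bar> \<le> \<bar>a\<bar>"
  shows "\<bar>g a + g b + g c + g d\<bar> \<le> 36 * (m a)\<^sup>2 * a\<^sup>2 * \<bar>a\<bar>"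
proof -
  have each: "\<bar>g y\<bar> \<le> 9 * (m a)\<^sup>2 * a\<^sup>2 * \<bar>a\<bar>" if "\<bar>y\<bar> \<le> \<bar>a\<bar>" for y
    using abs_g_le_linear[OF that] mult_left_mono[OF that, of "9 * (m a)\<^sup>2 * a\<^sup>2"] by simp
  show ?thesis using each[of a] each[OF b] each[OF c] each[OF d] by linarith
qed

lemma abs_sum4_g_le_ordered:
  assumes b: "\<bar>b\<bar> \<le> \<bar>a\<bar>" and c: "\<bar>c\<bar> \<le> \<bar>a\<bar>" and d: "\<bar>d\<bar> \<le> \<bar>a\<bar>"
    and bc: "\<bar>a + b\<bar> \<le> \<bar>a + c\<bar>" and cd: "\<bar>a + c\<bar> \<le> \<bar>a + d\<bar>"
  shows "\<bar>g a + g b + g c + g d\<bar> \<le>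
    72 * (1 + Kg) * (m a)\<^sup>2 * (\<bar>(a + b) * (a + c) * (a + d)\<bar> + a\<^sup>2 * \<bar>a + b + c + d\<bar>)"
proof -
  define \<sigma> X where "\<sigma> = a + b + c + d" and "X = (m a)\<^sup>2 * (\<bar>(a + b) * (a + c) * (a + d)\<bar> + a\<^sup>2 * \<bar>\<sigma>\<bar>)"
  have X: "0 \<le> X" by (simp add: X_def)
  have "\<bar>g a + g b + g c + g d\<bar> \<le> 72 * (1 + Kg) * X"
  proof (cases "\<bar>\<sigma>\<bar> \<le> \<bar>a\<bar> / 2")
    case small: True
    have cd_eq: "c + d = \<sigma> - (a + b)" and sum_eq: "(a + b) + (a + c) + (a + d) = 2 * a + \<sigma>"
      by (simp_all add: \<sigma>_def)
    from three_sums_bound[OF bc cd sum_eq small]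
    have br: "\<bar>a\<bar> * \<bar>a + b\<bar> * \<bar>a + c\<bar> + a\<^sup>2 * \<bar>\<sigma>\<bar> + \<bar>a\<bar> * (a + b)\<^sup>2 + \<bar>a\<bar> * (c + d)\<^sup>2
        \<le> 8 * (\<bar>(a + b) * (a + c) * (a + d)\<bar> + a\<^sup>2 * \<bar>\<sigma>\<bar>)"
      unfolding cd_eq .
    have "(m a)\<^sup>2 * (\<bar>a\<bar> * \<bar>a + b\<bar> * \<bar>a + c\<bar> + a\<^sup>2 * \<bar>\<sigma>\<bar> + \<bar>a\<bar> * (a + b)\<^sup>2 + \<bar>a\<bar> * (c + d)\<^sup>2)
        \<le> 8 * X"
      unfolding X_def using mult_left_mono[OF br zero_le_power2[of "m a"]] by (simp add: algebra_simps)
    then have "9 * Kg * ((m a)\<^sup>2 * (\<bar>a\<bar> * \<bar>a + b\<bar> * \<bar>a + c\<bar> + a\<^sup>2 * \<bar>\<sigma>\<bar> + \<bar>a\<bar> * (a + b)\<^sup>2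
        + \<bar>a\<bar> * (c + d)\<^sup>2)) \<le> 9 * Kg * (8 * X)"
      using Kg_nonneg by (intro mult_left_mono) auto
    with abs_sum4_g_le_Taylor[OF b c d]
    have "\<bar>g a + g b + g c + g d\<bar> \<le> 9 * Kg * (8 * X)"
      unfolding \<sigma>_def by (simp only: mult.assoc)
    also have "\<dots> \<le> 72 * (1 + Kg) * X" using X by (simp add: algebra_simps)
    finally show ?thesis .
  next
    case large: False
    have "\<bar>g a + g b + g c + g d\<bar> \<le> 36 * (m a)\<^sup>2 * a\<^sup>2 * \<bar>a\<bar>"
      using b c d by (rule abs_sum4_g_le_crude)
    also have "\<dots> \<le> 36 * (m a)\<^sup>2 * a\<^sup>2 * (2 * \<bar>\<sigma>\<bar>)"
      using large by (intro mult_left_mono) auto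
    also have "\<dots> \<le> 72 * X"
      by (simp add: X_def algebra_simps)
    also have "\<dots> \<le> 72 * (1 + Kg) * X" using X Kg_nonneg by (simp add: algebra_simps)
    finally show ?thesis .
  qed
  then show ?thesis by (simp add: X_def \<sigma>_def mult.assoc)
qed

lemma abs_sum4_g_le:
  assumes "\<bar>b\<bar> \<le> \<bar>a\<bar>" "\<bar>c\<bar> \<le> \<bar>a\<bar>" "\<bar>d\<bar> \<le> \<bar>a\<bar>"
  shows "\<bar>g a + g b + g c + g d\<bar> \<le>
    72 * (1 + Kg) * (m a)\<^sup>2 * (\<bar>(a + b) * (a + c) * (a + d)\<bar> + a\<^sup>2 * \<bar>a + b + c + d\<bar>)"
  using assms
proof (induction b c d rule: sorted3_wlog[where f = "\<lambda>y. \<bar>a + y\<bar>"])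
  case (1 b c d)
  then show ?case by (intro abs_sum4_g_le_ordered) auto
next
  case (2 b c d)
  then show ?case by (simp add: ac_simps)
next
  case (3 b c d)
  then show ?case by (simp add: ac_simps)
qed

lemma C_off_Omega_pos:
  assumes "0 \<le> C0"
  shows "0 < C_off_Omega C0"
proof -
  have "0 \<le> 9 * (6 + Kg) * C0\<^sup>2" "0 \<le> 24 * C0 ^ 3 * (1 + 18 * Kg * C0)" "0 < 90 * (1 + Kg) * (C0 + 2)"
    using Kg_nonneg assms by simp_all
  then show ?thesis unfolding C_off_Omega_def by linarith
qed

lemma norm_Mk_eq:
  assumes "sorts n xi \<sigma>" "n \<le> 6"
  shows "cmod (Mk n m xi) = \<bar>(\<Sum>i=1..6. g (star n xi \<sigma> i))\<bar>"
  unfolding Mk_def norm_mult norm_ii norm_of_real using sum_star[OF assms, of g] by (simp add: g_def)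

end

locale symbol_on_tuple = symbol_multiplier + frequency_tuple
begin

text \<open>\<open>M\<close> is \<open>M\<^sub>k\<^sub>+\<^sub>2 / i\<close> with the frequencies in decreasing order of modulus.\<close>

abbreviation M :: real where
  "M \<equiv> g (a 1) + g (a 2) + g (a 3) + g (a 4) + g (a 5) + g (a 6)"

lemma abs_M_le_of_a3_large:
  assumes a13: "\<bar>a 1\<bar> < C0 * \<bar>a 3\<bar>"
  shows "\<bar>M\<bar> \<le> 54 * C0\<^sup>2 * ((m (a 1))\<^sup>2 * \<bar>a 1\<bar> * \<bar>a 3\<bar>\<^sup>2)"
proof -
  define Y where "Y = (m (a 1))\<^sup>2 * \<bar>a 1\<bar> * \<bar>a 3\<bar>\<^sup>2"
  have each: "\<bar>g y\<bar> \<le> 9 * C0\<^sup>2 * Y" if "\<bar>y\<bar> \<le> \<bar>a 1\<bar>" for y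
  proof -
    have "\<bar>y\<bar>\<^sup>2 \<le> (C0 * \<bar>a 3\<bar>)\<^sup>2" using that a13 by (intro power_mono) auto
    then have "9 * (m (a 1))\<^sup>2 * \<bar>a 1\<bar> * y\<^sup>2 \<le> 9 * (m (a 1))\<^sup>2 * \<bar>a 1\<bar> * (C0 * \<bar>a 3\<bar>)\<^sup>2"
      by (intro mult_left_mono) auto
    with abs_g_le_quadratic[OF that] show ?thesis by (simp add: Y_def power_mult_distrib ac_simps)
  qed
  have "\<bar>M\<bar> \<le> 9 * C0\<^sup>2 * Y + 9 * C0\<^sup>2 * Y + 9 * C0\<^sup>2 * Y + 9 * C0\<^sup>2 * Y + 9 * C0\<^sup>2 * Y + 9 * C0\<^sup>2 * Y"
    by (intro abs_add_le_add each) (simp_all add: abs_sorted)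
  then show ?thesis unfolding Y_def[symmetric] by linarith
qed

lemma abs_M_le_of_top_cancel:
  assumes close: "\<bar>a 1 + a 2\<bar> * \<bar>a 1\<bar> < C0 * \<bar>a 3\<bar>\<^sup>2"
  shows "\<bar>M\<bar> \<le> (9 * Kg * C0 + 36) * ((m (a 1))\<^sup>2 * \<bar>a 1\<bar> * \<bar>a 3\<bar>\<^sup>2)"
proof -
  define Y where "Y = (m (a 1))\<^sup>2 * \<bar>a 1\<bar> * \<bar>a 3\<bar>\<^sup>2"
  have "\<bar>g (a 1) + g (a 2)\<bar> \<le> 9 * Kg * (m (a 1))\<^sup>2 * \<bar>a 1\<bar> * (\<bar>a 1 + a 2\<bar> * \<bar>a 1\<bar>)"
    using abs_g_add_le[OF order_refl, of "a 2" "a 1"] by (simp add: abs_sorted power2_eq_square ac_simps)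
  also have "\<dots> \<le> 9 * Kg * (m (a 1))\<^sup>2 * \<bar>a 1\<bar> * (C0 * \<bar>a 3\<bar>\<^sup>2)"
    using close Kg_nonneg by (intro mult_left_mono) auto
  finally have high: "\<bar>g (a 1) + g (a 2)\<bar> \<le> 9 * Kg * C0 * Y" by (simp add: Y_def ac_simps)
  have low: "\<bar>g y\<bar> \<le> 9 * Y" if "\<bar>y\<bar> \<le> \<bar>a 3\<bar>" for y
  proof -
    have "\<bar>y\<bar> \<le> \<bar>a 1\<bar>" using that abs_sorted[of 1 3] by simp
    moreover have "\<bar>y\<bar>\<^sup>2 \<le> \<bar>a 3\<bar>\<^sup>2" using that by (intro power_mono) auto
    ultimately show ?thesis
      using abs_g_le_quadratic mult_left_mono[of "y\<^sup>2" "\<bar>a 3\<bar>\<^sup>2" "9 * (m (a 1))\<^sup>2 * \<bar>a 1\<bar>"]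
      by (fastforce simp: Y_def ac_simps)
  qed
  have "\<bar>M\<bar> \<le> 9 * Kg * C0 * Y + 9 * Y + 9 * Y + 9 * Y + 9 * Y"
    by (intro abs_add_le_add high low) (simp_all add: abs_sorted)
  then show ?thesis unfolding Y_def[symmetric] by (simp add: algebra_simps)
qed

lemma abs_M_le_not_Omega3:
  assumes C0: "1 \<le> C0" and not_Omega3: "\<not> Omega3 C0 a"
  shows "\<bar>M\<bar> \<le> 9 * (6 + Kg) * C0\<^sup>2 * ((m (a 1))\<^sup>2 * \<bar>a 1\<bar> * \<bar>a 3\<bar>\<^sup>2)"
proof -
  define Y where "Y = (m (a 1))\<^sup>2 * \<bar>a 1\<bar> * \<bar>a 3\<bar>\<^sup>2"
  have Y: "0 \<le> Y" by (simp add: Y_def)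
  have "C0 \<le> C0\<^sup>2" "1 \<le> C0\<^sup>2" using power_increasing[of 1 2 C0] C0 by simp_all
  then have "Kg * C0 \<le> Kg * C0\<^sup>2" "0 \<le> Kg * C0\<^sup>2"
    using Kg_nonneg by (simp_all add: mult_left_mono)
  then have "54 * C0\<^sup>2 \<le> 9 * (6 + Kg) * C0\<^sup>2" "9 * Kg * C0 + 36 \<le> 9 * (6 + Kg) * C0\<^sup>2"
    using \<open>1 \<le> C0\<^sup>2\<close> by (simp_all add: algebra_simps)
  moreover have "\<bar>M\<bar> \<le> 54 * C0\<^sup>2 * Y \<or> \<bar>M\<bar> \<le> (9 * Kg * C0 + 36) * Y"
    using abs_M_le_of_a3_large abs_M_le_of_top_cancel not_Omega3
    by (force simp: Y_def Omega3_def ll_def)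
  ultimately show ?thesis
    unfolding Y_def[symmetric] using mult_right_mono[OF _ Y] by (meson order_trans)
qed

lemma g_eq_cube_low:
  assumes "1 \<le> C0" "ll C0 \<bar>a 3\<bar> N" "3 \<le> j" "j \<le> 6"
  shows "g (a j) = a j ^ 3"
proof -
  have "\<bar>a 3\<bar> \<le> C0 * \<bar>a 3\<bar>" using assms(1) by (simp add: mult_le_cancel_right1)
  then have "\<bar>a j\<bar> \<le> N" using assms abs_sorted[of 3 j] by (simp add: ll_def)
  then show ?thesis by (simp add: g_def m_eq_1)
qed

lemma abs_M_le_of_tail_dominant:
  assumes C0: "1 \<le> C0" and low: "ll C0 \<bar>a 3\<bar> N"
    and dominant: "\<bar>g (a 1) + g (a 2) + g (a 3) + g (a 4)\<bar> < C0 * \<bar>g (a 5) + g (a 6)\<bar>"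
  shows "\<bar>M\<bar> \<le> (2 * C0 + 2) * (\<bar>a 3\<bar> * \<bar>a 4\<bar> * \<bar>a 5\<bar>)"
proof -
  define G4 V where "G4 = g (a 1) + g (a 2) + g (a 3) + g (a 4)" and "V = \<bar>a 3\<bar> * \<bar>a 4\<bar> * \<bar>a 5\<bar>"
  have "g (a 5) + g (a 6) = a 5 ^ 3 + a 6 ^ 3" using g_eq_cube_low[OF C0 low] by simp
  then have "\<bar>g (a 5) + g (a 6)\<bar> \<le> 2 * V" using abs_add_cubes56_le by (simp add: V_def)
  moreover from this have "C0 * \<bar>g (a 5) + g (a 6)\<bar> \<le> C0 * (2 * V)" using C0 by (intro mult_left_mono) auto
  moreover have "\<bar>M\<bar> \<le> \<bar>G4\<bar> + \<bar>g (a 5) + g (a 6)\<bar>"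
    using abs_triangle_ineq[of G4 "g (a 5) + g (a 6)"] by (simp add: G4_def add.assoc)
  ultimately have "\<bar>M\<bar> \<le> C0 * (2 * V) + 2 * V" using dominant unfolding G4_def by linarith
  then show ?thesis by (simp add: V_def algebra_simps)
qed

lemma abs_M_le_high_low:
  assumes D: "1 \<le> D" and CD: "2 * D \<le> C0"
    and high_low: "sim D \<bar>a 1\<bar> \<bar>a 2\<bar>" "gtrsim D \<bar>a 2\<bar> N" "ll C0 \<bar>a 3\<bar> N" "sim D \<bar>a 3\<bar> \<bar>a 4\<bar>"
    and not_Omega1: "\<not> Omega1 C0 a" and not_Omega2: "\<not> Omega2 6 C0 D N a"
    and not_Omega4: "\<not> Omega4 C0 m a"
  shows "\<bar>M\<bar> \<le> 24 * C0 ^ 3 * (1 + 18 * Kg * C0) * (\<bar>a 3\<bar> * \<bar>a 4\<bar> * \<bar>a 5\<bar>)"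
proof -
  define V S where "V = \<bar>a 3\<bar> * \<bar>a 4\<bar> * \<bar>a 5\<bar>" and "S = a 3 ^ 3 + a 4 ^ 3 + a 5 ^ 3 + a 6 ^ 3"
  have V: "0 \<le> V" by (simp add: V_def)
  have C0: "1 \<le> C0" using D CD by simp
  have cubes: "g (a j) = a j ^ 3" if "j \<in> {3, 4, 5, 6}" for j
    using g_eq_cube_low[OF C0 high_low(3)] that by auto
  show ?thesis
  proof (cases "ll C0 \<bar>g (a 5) + g (a 6)\<bar> \<bar>g (a 1) + g (a 2) + g (a 3) + g (a 4)\<bar>")
    case True
    with not_Omega4 have "\<bar>S\<bar> \<le> 24 * C0 ^ 3 * V"
      using abs_sum_low_cubes_le[OF C0 abs_a3_le_half_a1[OF D CD high_low(2,3)] not_Omega1]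
      by (auto simp: Omega4_iff S_def V_def)
    moreover have "\<bar>a 1 ^ 3 + a 2 ^ 3\<bar> \<le> C0 * \<bar>S\<bar>"
      using not_Omega2 high_low by (auto simp: Omega2_6_iff ll_def S_def)
    then have "\<bar>g (a 1) + g (a 2)\<bar> \<le> 18 * Kg * (C0 * \<bar>S\<bar>)"
      using abs_g_add_le_cubes[of "a 2" "a 1"] mult_left_mono[of _ _ "18 * Kg"] Kg_nonneg
      by (fastforce simp: abs_sorted)
    moreover have "M = g (a 1) + g (a 2) + S" using cubes by (simp add: S_def add.assoc)
    ultimately have "\<bar>M\<bar> \<le> (1 + 18 * Kg * C0) * (24 * C0 ^ 3 * V)"
      using abs_triangle_ineq[of "g (a 1) + g (a 2)" S] Kg_nonneg C0
        mult_left_mono[of "\<bar>S\<bar>" "24 * C0 ^ 3 * V" "1 + 18 * Kg * C0"]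
      by (simp add: algebra_simps)
    then show ?thesis by (simp add: V_def ac_simps)
  next
    case False
    then have "\<bar>M\<bar> \<le> (2 * C0 + 2) * V"
      unfolding V_def by (intro abs_M_le_of_tail_dominant[OF C0 high_low(3)]) (simp add: ll_def)
    also have "\<dots> \<le> 24 * C0 ^ 3 * (1 + 18 * Kg * C0) * V"
    proof (intro mult_right_mono V)
      have "C0 \<le> C0 ^ 3" using power_increasing[of 1 3 C0] C0 by simp
      moreover have "24 * C0 ^ 3 \<le> 24 * C0 ^ 3 * (1 + 18 * Kg * C0)"
        using C0 mult_nonneg_nonneg[OF Kg_nonneg, of C0] by (simp add: mult_le_cancel_left1 mult.commute)
      ultimately show "2 * C0 + 2 \<le> 24 * C0 ^ 3 * (1 + 18 * Kg * C0)" using C0 by linarith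
    qed
    finally show ?thesis by (simp add: V_def)
  qed
qed

lemma abs_g56_le:
  shows "\<bar>g (a 5)\<bar> \<le> 9 * ((m (a 1))\<^sup>2 * \<bar>a 1\<bar>\<^sup>2 * \<bar>a 5\<bar>)"
    and "\<bar>g (a 6)\<bar> \<le> 9 * ((m (a 1))\<^sup>2 * \<bar>a 1\<bar>\<^sup>2 * \<bar>a 5\<bar>)"
proof -
  have "\<bar>a 5\<bar> \<le> \<bar>a 1\<bar>" "\<bar>a 6\<bar> \<le> \<bar>a 1\<bar>" "\<bar>a 6\<bar> \<le> \<bar>a 5\<bar>" by (simp_all add: abs_sorted)
  then show "\<bar>g (a 5)\<bar> \<le> 9 * ((m (a 1))\<^sup>2 * \<bar>a 1\<bar>\<^sup>2 * \<bar>a 5\<bar>)"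
    and "\<bar>g (a 6)\<bar> \<le> 9 * ((m (a 1))\<^sup>2 * \<bar>a 1\<bar>\<^sup>2 * \<bar>a 5\<bar>)"
    using abs_g_le_linear mult_left_mono[of "\<bar>a 6\<bar>" "\<bar>a 5\<bar>" "9 * (m (a 1))\<^sup>2 * (a 1)\<^sup>2"]
    by (fastforce simp: ac_simps)+
qed

lemma abs_sum4_g_le_small_product:
  assumes close: "\<bar>(a 1 + a 2) * (a 1 + a 3) * (a 1 + a 4)\<bar> < C0 * (\<bar>a 5\<bar> * \<bar>a 1\<bar>\<^sup>2)"
  shows "\<bar>g (a 1) + g (a 2) + g (a 3) + g (a 4)\<bar> \<le> 72 * (1 + Kg) * (C0 + 2) * ((m (a 1))\<^sup>2 * \<bar>a 1\<bar>\<^sup>2 * \<bar>a 5\<bar>)"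
proof -
  define P \<sigma> where "P = \<bar>(a 1 + a 2) * (a 1 + a 3) * (a 1 + a 4)\<bar>" and "\<sigma> = a 1 + a 2 + a 3 + a 4"
  have "\<bar>\<sigma>\<bar> \<le> 2 * \<bar>a 5\<bar>"
    using sum_zero abs_sorted[of 5 6] unfolding \<sigma>_def by linarith
  then have "(a 1)\<^sup>2 * \<bar>\<sigma>\<bar> \<le> (a 1)\<^sup>2 * (2 * \<bar>a 5\<bar>)" by (intro mult_left_mono) auto
  with close have "P + (a 1)\<^sup>2 * \<bar>\<sigma>\<bar> \<le> (C0 + 2) * ((a 1)\<^sup>2 * \<bar>a 5\<bar>)"
    unfolding P_def by (simp add: algebra_simps)
  then have "72 * (1 + Kg) * (m (a 1))\<^sup>2 * (P + (a 1)\<^sup>2 * \<bar>\<sigma>\<bar>)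
      \<le> 72 * (1 + Kg) * (m (a 1))\<^sup>2 * ((C0 + 2) * ((a 1)\<^sup>2 * \<bar>a 5\<bar>))"
    using Kg_nonneg by (intro mult_left_mono) auto
  moreover have "\<bar>a 2\<bar> \<le> \<bar>a 1\<bar>" "\<bar>a 3\<bar> \<le> \<bar>a 1\<bar>" "\<bar>a 4\<bar> \<le> \<bar>a 1\<bar>" by (simp_all add: abs_sorted)
  note abs_sum4_g_le[OF this]
  ultimately show ?thesis unfolding P_def \<sigma>_def by (simp add: ac_simps)
qed

lemma abs_M_le_gap45:
  assumes C0: "1 \<le> C0" and gap: "ll C0 \<bar>a 5\<bar> \<bar>a 4\<bar>" and not_Omega4: "\<not> Omega4 C0 m a"
  shows "\<bar>M\<bar> \<le> 90 * (1 + Kg) * (C0 + 2) * ((m (a 1))\<^sup>2 * \<bar>a 1\<bar>\<^sup>2 * \<bar>a 5\<bar>)"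
proof -
  define Z G4 where "Z = (m (a 1))\<^sup>2 * \<bar>a 1\<bar>\<^sup>2 * \<bar>a 5\<bar>" and "G4 = g (a 1) + g (a 2) + g (a 3) + g (a 4)"
  define W where "W = (1 + Kg) * (C0 + 2)"
  have Z: "0 \<le> Z" by (simp add: Z_def)
  have W: "C0 + 2 \<le> W" using Kg_nonneg C0 by (simp add: W_def algebra_simps)
  then have WZ: "C0 * Z + 2 * Z \<le> W * Z" using mult_right_mono[OF W Z] by (simp add: algebra_simps)
  have "\<bar>g (a 5)\<bar> \<le> 9 * Z" "\<bar>g (a 6)\<bar> \<le> 9 * Z"
    using abs_g56_le unfolding Z_def by simp_all
  then have g56: "\<bar>g (a 5) + g (a 6)\<bar> \<le> 18 * Z" using abs_triangle_ineq[of "g (a 5)" "g (a 6)"] by linarith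
  have "\<bar>G4\<bar> \<le> 72 * W * Z + 18 * C0 * Z"
  proof (cases "ll C0 \<bar>g (a 5) + g (a 6)\<bar> \<bar>G4\<bar>")
    case True
    with gap not_Omega4
    have "\<bar>(a 1 + a 2) * (a 1 + a 3) * (a 1 + a 4)\<bar> < C0 * (\<bar>a 5\<bar> * \<bar>a 1\<bar>\<^sup>2)"
      by (simp add: Omega4_iff G4_def ll_def abs_mult)
    then have "\<bar>G4\<bar> \<le> 72 * (1 + Kg) * (C0 + 2) * Z"
      unfolding G4_def Z_def by (rule abs_sum4_g_le_small_product)
    moreover have "0 \<le> 18 * C0 * Z" using C0 Z by simp
    ultimately show ?thesis unfolding W_def by (simp only: mult.assoc)
  next
    case False
    then have "\<bar>G4\<bar> < C0 * \<bar>g (a 5) + g (a 6)\<bar>" by (simp add: ll_def)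
    moreover have "C0 * \<bar>g (a 5) + g (a 6)\<bar> \<le> 18 * C0 * Z"
      using mult_left_mono[OF g56, of C0] C0 by (simp add: ac_simps)
    moreover have "0 \<le> 72 * W * Z" using W C0 Z by simp
    ultimately show ?thesis by linarith
  qed
  moreover have "\<bar>M\<bar> \<le> \<bar>G4\<bar> + \<bar>g (a 5) + g (a 6)\<bar>"
    using abs_triangle_ineq[of G4 "g (a 5) + g (a 6)"] by (simp add: G4_def add.assoc)
  ultimately have "\<bar>M\<bar> \<le> 90 * W * Z" using g56 WZ by linarith
  then show ?thesis unfolding W_def Z_def by (simp only: mult.assoc)
qed

lemma abs_M_bounds_off_Omega:
  assumes D: "1 \<le> D" and C0: "2 * D + 1 \<le> C0" and not_Omega: "\<not> in_Omega 6 C0 D N m a"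
  defines "C \<equiv> C_off_Omega C0"
  shows "\<bar>M\<bar> \<le> C * (m (a 1))\<^sup>2 * \<bar>a 1\<bar> * \<bar>a 3\<bar>\<^sup>2"
    and "sim D \<bar>a 1\<bar> \<bar>a 2\<bar> \<Longrightarrow> gtrsim D \<bar>a 2\<bar> N \<Longrightarrow> ll C0 \<bar>a 3\<bar> N \<Longrightarrow> sim D \<bar>a 3\<bar> \<bar>a 4\<bar> \<Longrightarrow>
      \<bar>M\<bar> \<le> C * \<bar>a 3\<bar> * \<bar>a 4\<bar> * \<bar>a 5\<bar>"
    and "ll C0 \<bar>a 5\<bar> \<bar>a 4\<bar> \<Longrightarrow> \<bar>M\<bar> \<le> C * (m (a 1))\<^sup>2 * \<bar>a 1\<bar>\<^sup>2 * \<bar>a 5\<bar>"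
proof -
  have C0_1: "1 \<le> C0" and CD: "2 * D \<le> C0" using D C0 by auto
  have c1: "0 \<le> 9 * (6 + Kg) * C0\<^sup>2" and c2: "0 \<le> 24 * C0 ^ 3 * (1 + 18 * Kg * C0)"
    and c3: "0 \<le> 90 * (1 + Kg) * (C0 + 2)"
    using Kg_nonneg C0_1 by simp_all
  have weaken: "\<bar>M\<bar> \<le> C * X" if "\<bar>M\<bar> \<le> c * X" "c \<le> C" "0 \<le> X" for c X
    using that(1) mult_right_mono[OF that(2,3)] by linarith
  show "\<bar>M\<bar> \<le> C * (m (a 1))\<^sup>2 * \<bar>a 1\<bar> * \<bar>a 3\<bar>\<^sup>2"
    using weaken[OF abs_M_le_not_Omega3[OF C0_1]] not_Omega c2 c3
    by (simp add: in_Omega_def C_def C_off_Omega_def mult.assoc)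
  show "\<bar>M\<bar> \<le> C * \<bar>a 3\<bar> * \<bar>a 4\<bar> * \<bar>a 5\<bar>"
    if "sim D \<bar>a 1\<bar> \<bar>a 2\<bar>" "gtrsim D \<bar>a 2\<bar> N" "ll C0 \<bar>a 3\<bar> N" "sim D \<bar>a 3\<bar> \<bar>a 4\<bar>"
    using weaken[OF abs_M_le_high_low[OF D CD that]] not_Omega c1 c3
    by (simp add: in_Omega_def C_def C_off_Omega_def mult.assoc)
  show "\<bar>M\<bar> \<le> C * (m (a 1))\<^sup>2 * \<bar>a 1\<bar>\<^sup>2 * \<bar>a 5\<bar>" if "ll C0 \<bar>a 5\<bar> \<bar>a 4\<bar>"
    using weaken[OF abs_M_le_gap45[OF C0_1 that]] not_Omega c1 c2
    by (simp add: in_Omega_def C_def C_off_Omega_def mult.assoc)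
qed

end

context
  fixes s :: real and mu :: "real \<Rightarrow> real"
  assumes s_ge: "1/2 \<le> s" and s_less: "s < 1" and profile: "profile s mu"
begin

lemma mu_pos: "0 < mu x" and mu_le_1: "mu x \<le> 1" and mu_even: "mu (-x) = mu x"
  and mu_eq_1: "\<bar>x\<bar> \<le> 1 \<Longrightarrow> mu x = 1"
  and mu_tail: "2 < \<bar>x\<bar> \<Longrightarrow> mu x = \<bar>x\<bar> powr (s - 1)"
  and mu_antimono: "\<bar>x\<bar> \<le> \<bar>y\<bar> \<Longrightarrow> mu y \<le> mu x"
  using profile unfolding profile_def by auto

lemma mu_ge_third: "\<bar>x\<bar> \<le> 3 \<Longrightarrow> 1/3 \<le> mu x"
proof -
  assume "\<bar>x\<bar> \<le> 3"
  then have "mu 3 \<le> mu x" by (intro mu_antimono) auto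
  moreover have "(1/3 :: real) = 3 powr (-1)" by (simp add: powr_minus_divide)
  moreover have "(3::real) powr (-1) \<le> 3 powr (s - 1)" using s_ge by (intro powr_mono) auto
  ultimately show ?thesis using mu_tail[of 3] by simp
qed

lemma mu_sq_mult_power_tail:
  assumes "2 < \<bar>x\<bar>"
  shows "(mu x)\<^sup>2 * \<bar>x\<bar> ^ p = \<bar>x\<bar> powr (2 * s - 2 + p)"
proof -
  have "(mu x)\<^sup>2 = \<bar>x\<bar> powr (2 * (s - 1))"
    using assms by (simp add: mu_tail powr_power)
  moreover have "\<bar>x\<bar> ^ p = \<bar>x\<bar> powr p" using assms by (simp add: powr_realpow)
  ultimately show ?thesis by (simp add: powr_add[symmetric] algebra_simps)
qed

text \<open>On the tail the exponent of \<open>\<bar>x\<bar>\<close> is \<open>2 s - 2 + p \<ge> 0\<close>; this is where \<open>s \<ge> 1/2\<close> is used.\<close>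

lemma mu_almost_mono:
  assumes vu: "\<bar>v\<bar> \<le> \<bar>u\<bar>" and p: "0 < p"
  shows "(mu v)\<^sup>2 * \<bar>v\<bar> ^ p \<le> 9 * (mu u)\<^sup>2 * \<bar>u\<bar> ^ p"
proof -
  define e where "e = 2 * s - 2 + p"
  have e_ge: "real p - 1 \<le> e" using s_ge unfolding e_def by simp
  have mu_sq_le: "(mu x)\<^sup>2 \<le> 1" for x using mu_pos[of x] mu_le_1[of x] by (simp add: power_le_one)
  note tail = mu_sq_mult_power_tail[of _ p, folded e_def]
  show ?thesis
  proof (cases "\<bar>u\<bar> \<le> 2")
    case True
    have "(mu v)\<^sup>2 * \<bar>v\<bar> ^ p \<le> 1 * \<bar>u\<bar> ^ p"
      using mu_sq_le vu by (intro mult_mono power_mono) auto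
    also have "\<dots> \<le> (9 * (mu u)\<^sup>2) * \<bar>u\<bar> ^ p"
    proof (intro mult_right_mono)
      have "(1/3)\<^sup>2 \<le> (mu u)\<^sup>2" using True mu_ge_third[of u] by (intro power_mono) auto
      then show "1 \<le> 9 * (mu u)\<^sup>2" by (simp add: power2_eq_square)
    qed simp
    finally show ?thesis by simp
  next
    case u: False
    have "(mu v)\<^sup>2 * \<bar>v\<bar> ^ p \<le> 2 * \<bar>u\<bar> powr e"
    proof (cases "\<bar>v\<bar> \<le> 2")
      case True
      have "(mu v)\<^sup>2 * \<bar>v\<bar> ^ p \<le> 1 * 2 ^ p"
        using mu_sq_le True by (intro mult_mono power_mono) auto
      also have "\<dots> = 2 * 2 powr (real p - 1)" by (simp add: powr_diff powr_realpow)
      also have "\<dots> \<le> 2 * 2 powr e" using e_ge by (intro mult_left_mono powr_mono) auto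
      also have "\<dots> \<le> 2 * \<bar>u\<bar> powr e" using u e_ge p by (intro mult_left_mono powr_mono2) auto
      finally show ?thesis .
    next
      case False
      have "\<bar>v\<bar> powr e \<le> \<bar>u\<bar> powr e" using vu e_ge p by (intro powr_mono2) auto
      then show ?thesis using tail[of v] False powr_ge_zero[of "\<bar>u\<bar>" e] by linarith
    qed
    then have "(mu v)\<^sup>2 * \<bar>v\<bar> ^ p \<le> 9 * ((mu u)\<^sup>2 * \<bar>u\<bar> ^ p)"
      using tail[of u] u powr_ge_zero[of "\<bar>u\<bar>" e] by linarith
    then show ?thesis by (simp add: mult.assoc)
  qed
qed

lemma differentiable_deriv_mu: "(deriv ^^ n) mu differentiable at x"
  using profile unfolding profile_def differentiable_on_def by auto

lemma has_deriv_mu: "(mu has_real_derivative deriv mu x) (at x)"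
  using differentiable_deriv_mu[of 0] by (simp add: DERIV_deriv_iff_real_differentiable)

lemma has_deriv_deriv_mu: "(deriv mu has_real_derivative deriv (deriv mu) x) (at x)"
  using differentiable_deriv_mu[of 1] by (simp add: DERIV_deriv_iff_real_differentiable)

lemma continuous_deriv2_mu: "continuous_on UNIV (deriv (deriv mu))"
  using differentiable_deriv_mu[of 2]
  by (auto simp: numeral_2_eq_2 intro!: differentiable_imp_continuous_within continuous_at_imp_continuous_on)

lemma continuous_deriv_mu: "continuous_on UNIV (deriv mu)"
  using has_deriv_deriv_mu
  by (auto intro!: continuous_at_imp_continuous_on DERIV_isCont)

text \<open>On the tail \<open>mu\<close> is homogeneous of degree \<open>s - 1\<close>, so each derivative costs exactly one
  power of \<open>x\<close>; this is what makes the scale-invariant bounds below hold.\<close>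

lemma deriv_mu_tail:
  assumes "2 < \<bar>x\<bar>"
  shows "deriv mu x = (s - 1) * mu x / x"
proof -
  have "(mu has_real_derivative (s - 1) * mu x / x) (at x)"
  proof (cases "0 < x")
    case True
    have "((\<lambda>y. y powr (s - 1)) has_real_derivative (s - 1) * x powr (s - 1 - 1)) (at x)"
      using True by (intro has_real_derivative_powr) auto
    then have "(mu has_real_derivative (s - 1) * x powr (s - 1 - 1)) (at x)"
      by (rule has_field_derivative_transform_within_open[where S = "{2<..}"])
        (use assms True mu_tail in auto)
    then show ?thesis
      using True assms mu_tail[OF assms] by (simp add: powr_diff power2_eq_square)
  next
    case False
    have "((\<lambda>y. (- y) powr (s - 1)) has_real_derivative (s - 1) * (- x) powr (s - 1 - 1) * (- 1)) (at x)"
      using False assms by (auto intro!: derivative_eq_intros)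
    then have "(mu has_real_derivative (s - 1) * (- x) powr (s - 1 - 1) * (- 1)) (at x)"
      by (rule has_field_derivative_transform_within_open[where S = "{..<-2}"])
        (use assms False mu_tail in auto)
    then show ?thesis
      using False assms mu_tail[OF assms] by (simp add: powr_diff power2_eq_square)
  qed
  then show ?thesis using DERIV_unique has_deriv_mu by blast
qed

lemma deriv2_mu_tail:
  assumes "2 < \<bar>x\<bar>"
  shows "deriv (deriv mu) x = (s - 1) * (s - 2) * mu x / x\<^sup>2"
proof -
  have "((\<lambda>y. (s - 1) * mu y / y) has_real_derivative
      (s - 1) * ((deriv mu x * x - mu x) / x\<^sup>2)) (at x)"
    using assms by (auto intro!: derivative_eq_intros has_deriv_mu simp: power2_eq_square algebra_simps)
  then have "(deriv mu has_real_derivative (s - 1) * ((deriv mu x * x - mu x) / x\<^sup>2)) (at x)"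
    by (rule has_field_derivative_transform_within_open[where S = "{y. 2 < \<bar>y\<bar>}"])
      (use assms deriv_mu_tail in \<open>auto intro!: open_Collect_less continuous_intros\<close>)
  then have "deriv (deriv mu) x = (s - 1) * ((deriv mu x * x - mu x) / x\<^sup>2)"
    using DERIV_unique has_deriv_deriv_mu by blast
  also have "deriv mu x * x = (s - 1) * mu x"
    using assms by (simp add: deriv_mu_tail)
  finally show ?thesis
    using assms by (simp add: field_simps)
qed

lemma bounded_by_mu:
  fixes h :: "real \<Rightarrow> real"
  assumes "continuous_on UNIV h" and tail: "\<And>x. 2 < \<bar>x\<bar> \<Longrightarrow> \<bar>h x\<bar> \<le> c * mu x"
  shows "\<exists>K. \<forall>x. \<bar>h x\<bar> \<le> K * mu x"
proof -
  obtain B where B: "\<And>x. x \<in> cball 0 2 \<Longrightarrow> norm (h x) \<le> B"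
    using continuous_on_compact_bound[OF compact_cball continuous_on_subset[OF assms(1)]] by blast
  have "\<bar>h x\<bar> \<le> (3 * \<bar>B\<bar> + \<bar>c\<bar>) * mu x" for x
  proof (cases "\<bar>x\<bar> \<le> 2")
    case True
    then have "\<bar>h x\<bar> \<le> 3 * \<bar>B\<bar> * (1/3)" using B[of x] by auto
    also have "\<dots> \<le> 3 * \<bar>B\<bar> * mu x" using mu_ge_third[of x] True by (intro mult_left_mono) auto
    also have "\<dots> \<le> (3 * \<bar>B\<bar> + \<bar>c\<bar>) * mu x" using mu_pos[of x] by (intro mult_right_mono) auto
    finally show ?thesis .
  next
    case False
    then have "\<bar>h x\<bar> \<le> c * mu x" using tail by auto
    also have "\<dots> \<le> (3 * \<bar>B\<bar> + \<bar>c\<bar>) * mu x" using mu_pos[of x] by (intro mult_right_mono) auto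
    finally show ?thesis .
  qed
  then show ?thesis by blast
qed

lemma mu_deriv_bounds:
  obtains K where "\<And>x. \<bar>deriv mu x * x\<bar> \<le> K * mu x" "\<And>x. \<bar>deriv (deriv mu) x * x\<^sup>2\<bar> \<le> K * mu x"
proof -
  have "\<exists>K. \<forall>x. \<bar>deriv mu x * x\<bar> \<le> K * mu x"
  proof (rule bounded_by_mu)
    show "\<bar>deriv mu x * x\<bar> \<le> 1 * mu x" if "2 < \<bar>x\<bar>" for x
      using that s_ge s_less mu_pos[of x] by (simp add: deriv_mu_tail abs_mult)
  qed (auto intro!: continuous_intros continuous_on_compose2[OF continuous_deriv_mu])
  moreover have "\<exists>K. \<forall>x. \<bar>deriv (deriv mu) x * x\<^sup>2\<bar> \<le> K * mu x"
  proof (rule bounded_by_mu)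
    show "\<bar>deriv (deriv mu) x * x\<^sup>2\<bar> \<le> 2 * mu x" if "2 < \<bar>x\<bar>" for x
    proof -
      have "(1 - s) * (2 - s) \<le> 1 * 2" using s_ge s_less by (intro mult_mono) auto
      then have "\<bar>(s - 1) * (s - 2)\<bar> \<le> 2" using s_less by (simp add: abs_mult)
      then show ?thesis
        using that mu_pos[of x] by (simp add: deriv2_mu_tail abs_mult mult_right_mono)
    qed
  qed (auto intro!: continuous_intros continuous_on_compose2[OF continuous_deriv2_mu])
  ultimately obtain K1 K2 where "\<forall>x. \<bar>deriv mu x * x\<bar> \<le> K1 * mu x"
    "\<forall>x. \<bar>deriv (deriv mu) x * x\<^sup>2\<bar> \<le> K2 * mu x" by blast
  then show ?thesis
    using mu_pos by (intro that[of "max K1 K2"]) (auto intro: order.trans mult_right_mono)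
qed

lemma symbol_multiplier_mult:
  assumes N: "1 \<le> N"
    and K1: "\<And>x. \<bar>deriv mu x * x\<bar> \<le> K * mu x" and K2: "\<And>x. \<bar>deriv (deriv mu) x * x\<^sup>2\<bar> \<le> K * mu x"
  shows "symbol_multiplier (mult mu N) (\<lambda>x. deriv mu (x / N) / N) (\<lambda>x. deriv (deriv mu) (x / N) / N\<^sup>2) K N"
proof
  fix x y :: real and p :: nat
  have N0: "0 < N" using N by simp
  have "((\<lambda>x. mu (x / N)) has_real_derivative deriv mu (x / N) * (1 / N)) (at x)"
    by (rule DERIV_chain2[OF has_deriv_mu]) (use N0 in \<open>auto intro!: derivative_eq_intros\<close>)
  then show "(mult mu N has_real_derivative deriv mu (x / N) / N) (at x)"
    using N0 by (simp add: mult_def[abs_def])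
  have "((\<lambda>x. deriv mu (x / N)) has_real_derivative deriv (deriv mu) (x / N) * (1 / N)) (at x)"
    by (rule DERIV_chain2[OF has_deriv_deriv_mu]) (use N0 in \<open>auto intro!: derivative_eq_intros\<close>)
  then show "((\<lambda>x. deriv mu (x / N) / N) has_real_derivative deriv (deriv mu) (x / N) / N\<^sup>2) (at x)"
    using N0 by (auto intro!: derivative_eq_intros simp: power2_eq_square)
  show "0 < mult mu N x" "mult mu N x \<le> 1" "mult mu N (- x) = mult mu N x"
    using mu_pos mu_le_1 mu_even[of "x / N"] by (simp_all add: mult_def)
  show "\<bar>x\<bar> \<le> N \<Longrightarrow> mult mu N x = 1"
    using N0 by (simp add: mult_def mu_eq_1)
  show "\<bar>deriv mu (x / N) / N * x\<bar> \<le> K * mult mu N x"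
    using K1[of "x / N"] by (simp add: mult_def)
  show "\<bar>deriv (deriv mu) (x / N) / N\<^sup>2 * x\<^sup>2\<bar> \<le> K * mult mu N x"
    using K2[of "x / N"] by (simp add: mult_def power_divide)
  assume "\<bar>y\<bar> \<le> \<bar>x\<bar>" and "0 < p"
  then have "(mu (y / N))\<^sup>2 * \<bar>y / N\<bar> ^ p * N ^ p \<le> 9 * (mu (x / N))\<^sup>2 * \<bar>x / N\<bar> ^ p * N ^ p"
    using N0 by (intro mult_right_mono mu_almost_mono) (auto simp: divide_right_mono)
  then show "(mult mu N y)\<^sup>2 * \<bar>y\<bar> ^ p \<le> 9 * (mult mu N x)\<^sup>2 * \<bar>x\<bar> ^ p"
    using N0 by (simp add: mult_def power_divide mult.assoc)
qed

lemma mult_bounds_off_Omega: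
  assumes K: "\<And>x. \<bar>deriv mu x * x\<bar> \<le> K * mu x" "\<And>x. \<bar>deriv (deriv mu) x * x\<^sup>2\<bar> \<le> K * mu x"
    and n: "n \<le> 6" and D: "1 \<le> D" and C0: "2 * D + 1 \<le> C0" and N: "1 \<le> N"
    and Gamma: "in_Gamma n lam xi" and sorts: "sorts n xi \<sigma>"
    and not_Omega: "\<not> in_Omega n C0 D N (mult mu N) (star n xi \<sigma>)"
  defines "C \<equiv> symbol_multiplier.C_off_Omega K C0" and "xs \<equiv> star n xi \<sigma>"
  shows "cmod (Mk n (mult mu N) xi) \<le> C * (mult mu N (xs 1))\<^sup>2 * \<bar>xs 1\<bar> * \<bar>xs 3\<bar>\<^sup>2"
    and "sim D \<bar>xs 1\<bar> \<bar>xs 2\<bar> \<Longrightarrow> gtrsim D \<bar>xs 2\<bar> N \<Longrightarrow> ll C0 \<bar>xs 3\<bar> N \<Longrightarrow> sim D \<bar>xs 3\<bar> \<bar>xs 4\<bar> \<Longrightarrow>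
      cmod (Mk n (mult mu N) xi) \<le> C * \<bar>xs 3\<bar> * \<bar>xs 4\<bar> * \<bar>xs 5\<bar>"
    and "ll C0 \<bar>xs 5\<bar> \<bar>xs 4\<bar> \<Longrightarrow>
      cmod (Mk n (mult mu N) xi) \<le> C * (mult mu N (xs 1))\<^sup>2 * \<bar>xs 1\<bar>\<^sup>2 * \<bar>xs 5\<bar>"
proof -
  interpret symbol_on_tuple "mult mu N" "\<lambda>x. deriv mu (x / N) / N" "\<lambda>x. deriv (deriv mu) (x / N) / N\<^sup>2"
    K N xs
    using symbol_multiplier_mult[OF N K] frequency_tuple_star[OF n Gamma sorts]
    unfolding xs_def by (rule symbol_on_tuple.intro)
  have M: "cmod (Mk n (mult mu N) xi) = \<bar>M\<bar>"
    using norm_Mk_eq[OF sorts n] by (simp add: xs_def numeral_eq_Suc add.assoc)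
  note bounds = abs_M_bounds_off_Omega[OF D C0, folded C_def M]
  have "\<not> in_Omega 6 C0 D N (mult mu N) xs"
    using not_Omega in_Omega_star[OF n] by (simp add: xs_def)
  from bounds[OF this] show "cmod (Mk n (mult mu N) xi) \<le> C * (mult mu N (xs 1))\<^sup>2 * \<bar>xs 1\<bar> * \<bar>xs 3\<bar>\<^sup>2"
    and "sim D \<bar>xs 1\<bar> \<bar>xs 2\<bar> \<Longrightarrow> gtrsim D \<bar>xs 2\<bar> N \<Longrightarrow> ll C0 \<bar>xs 3\<bar> N \<Longrightarrow> sim D \<bar>xs 3\<bar> \<bar>xs 4\<bar> \<Longrightarrow>
      cmod (Mk n (mult mu N) xi) \<le> C * \<bar>xs 3\<bar> * \<bar>xs 4\<bar> * \<bar>xs 5\<bar>"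
    and "ll C0 \<bar>xs 5\<bar> \<bar>xs 4\<bar> \<Longrightarrow>
      cmod (Mk n (mult mu N) xi) \<le> C * (mult mu N (xs 1))\<^sup>2 * \<bar>xs 1\<bar>\<^sup>2 * \<bar>xs 5\<bar>"
    by blast+
qed

end

theorem mainTheorem3:
  fixes k :: nat and s :: real and mu :: "real \<Rightarrow> real"
  assumes "k \<in> {3, 4}" and "1/2 \<le> s" and "s < 1" and "profile s mu"
  shows "\<forall>D\<ge>1. \<exists>C0min. \<forall>C0\<ge>C0min. \<exists>C>0.
    \<forall>N lam xi \<sigma>. N \<ge> 1 \<longrightarrow> lam \<ge> 1 \<longrightarrow> in_Gamma (k+2) lam xi \<longrightarrow> sorts (k+2) xi \<sigma> \<longrightarrow>
      (let m = mult mu N; xs = star (k+2) xi \<sigma>; M = cmod (Mk (k+2) m xi) in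
       \<not> in_Omega (k+2) C0 D N m xs \<longrightarrow>
         M \<le> C * (m (xs 1))\<^sup>2 * \<bar>xs 1\<bar> * \<bar>xs 3\<bar>\<^sup>2 \<and>
         (sim D \<bar>xs 1\<bar> \<bar>xs 2\<bar> \<and> gtrsim D \<bar>xs 2\<bar> N \<and> ll C0 \<bar>xs 3\<bar> N \<and> sim D \<bar>xs 3\<bar> \<bar>xs 4\<bar>
            \<longrightarrow> M \<le> C * \<bar>xs 3\<bar> * \<bar>xs 4\<bar> * \<bar>xs 5\<bar>) \<and>
         (ll C0 \<bar>xs 5\<bar> \<bar>xs 4\<bar> \<longrightarrow> M \<le> C * (m (xs 1))\<^sup>2 * \<bar>xs 1\<bar>\<^sup>2 * \<bar>xs 5\<bar>))"
proof -
  have n: "k + 2 \<le> 6" using assms(1) by auto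
  obtain K where K: "\<And>x. \<bar>deriv mu x * x\<bar> \<le> K * mu x" "\<And>x. \<bar>deriv (deriv mu) x * x\<^sup>2\<bar> \<le> K * mu x"
    using mu_deriv_bounds[OF assms(2-4)] by blast
  have pos: "0 < symbol_multiplier.C_off_Omega K C0" if "0 \<le> C0" for C0
    using symbol_multiplier.C_off_Omega_pos[OF symbol_multiplier_mult[OF assms(2-4) order_refl K] that] .
  note bounds = mult_bounds_off_Omega[OF assms(2-4) K n]
  show ?thesis
    unfolding Let_def
    apply (intro allI impI)
    subgoal for D
      apply (rule exI[of _ "2 * D + 1"], intro allI impI)
      subgoal for C0
        by (intro exI[of _ "symbol_multiplier.C_off_Omega K C0"] conjI allI impI pos bounds) auto
      done
    done
qed

end
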